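(* Let $X$ be a topological space, $b\in X$, and $\mathcal{U}$ an open covering of $X$ such that $b\in U$ for every $U\in\mathcal{U}$, every $U\in\mathcal{U}$ is path-connected, $U\cap V$ is path-connected for all $U,V\in\mathcal{U}$, and $U\cap V\cap W$ is path-connected for all $U,V,W\in\mathcal{U}$. Let $G$ be a group. Given a family $\{h_U\in H^1(U,b)\}_{U\in\mathcal{U}}$, there exists $h\in H^1(X,b)$ with $r_U(h)=h_U$ for every $U\in\mathcal{U}$ if and only if $r_{U\cap V}(h_U)=r_{U\cap V}(h_V)$ for every pair $U,V\in\mathcal{U}$. If such a class $h$ exists, it is unique.
   Context: Conventions: a path in a space $W$ is a continuous map $[0,1]\to W$; $P(W)$ is the set of paths; $p\cdot q$ is concatenation when $p(1)=q(0)$; homotopies of paths are relative to $\{0,1\}$, $p\sim q$ means homotopic. $G$ has unit $1$. For $b\in W$: a $0$-cochain of $(W,b)$ is a map $c\colon W\to G$ with $c(b)=1$; these form a group $C^0(W,b)$ under pointwise multiplication. A $1$-cochain is a map $u\colon P(W)\to G$ with $u(p)=1$ for the constant path at $b$; it is a cocycle if $u(p)=u(q)$ when $p\sim q$ and $u(p\cdot q)=u(p)u(q)$ when defined. $C^0(W,b)$ acts on cocycles by $(c\bullet u)(p)=c(p(0))u(p)c(p(1))^{-1}$; $H^1(W,b)$ is the set of orbits. For $A\subset W$ with $b\in A$, $r_A\colon H^1(W,b)\to H^1(A,b)$ is induced by restricting cocycles to paths in $A$. *)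

theory Defs
  imports "HOL-Analysis.Analysis" "HOL-Algebra.Group"
begin

definition path_cat :: "(real \<Rightarrow> 'a) \<Rightarrow> (real \<Rightarrow> 'a) \<Rightarrow> real \<Rightarrow> 'a" where
  "path_cat p q = (\<lambda>t. if t \<le> 1/2 then p (2 * t) else q (2 * t - 1))"

definition path_homotopic :: "'a topology \<Rightarrow> (real \<Rightarrow> 'a) \<Rightarrow> (real \<Rightarrow> 'a) \<Rightarrow> bool" where
  "path_homotopic W p q \<longleftrightarrow>
     homotopic_with (\<lambda>h. h 0 = p 0 \<and> h 1 = p 1) (top_of_set {0..1}) W p q"

definition cochain0 :: "'a topology \<Rightarrow> 'a \<Rightarrow> ('g, 'm) monoid_scheme \<Rightarrow> ('a \<Rightarrow> 'g) set" where
  "cochain0 W b G = {c. c \<in> topspace W \<rightarrow>\<^sub>E carrier G \<and> c b = \<one>\<^bsub>G\<^esub>}"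

definition cocycle1 :: "'a topology \<Rightarrow> 'a \<Rightarrow> ('g, 'm) monoid_scheme \<Rightarrow> ((real \<Rightarrow> 'a) \<Rightarrow> 'g) set" where
  "cocycle1 W b G = {u. u \<in> Collect (pathin W) \<rightarrow>\<^sub>E carrier G
      \<and> u (\<lambda>t. b) = \<one>\<^bsub>G\<^esub>
      \<and> (\<forall>p q. pathin W p \<and> pathin W q \<and> path_homotopic W p q \<longrightarrow> u p = u q)
      \<and> (\<forall>p q. pathin W p \<and> pathin W q \<and> p 1 = q 0 \<longrightarrow>
                u (path_cat p q) = u p \<otimes>\<^bsub>G\<^esub> u q)}"

definition cochain_act :: "'a topology \<Rightarrow> ('g, 'm) monoid_scheme \<Rightarrow> ('a \<Rightarrow> 'g) \<Rightarrow> ((real \<Rightarrow> 'a) \<Rightarrow> 'g)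
     \<Rightarrow> ((real \<Rightarrow> 'a) \<Rightarrow> 'g)" where
  "cochain_act W G c u = (\<lambda>p\<in>Collect (pathin W). c (p 0) \<otimes>\<^bsub>G\<^esub> u p \<otimes>\<^bsub>G\<^esub> inv\<^bsub>G\<^esub> (c (p 1)))"

definition orbit1 :: "'a topology \<Rightarrow> 'a \<Rightarrow> ('g, 'm) monoid_scheme \<Rightarrow> ((real \<Rightarrow> 'a) \<Rightarrow> 'g)
     \<Rightarrow> ((real \<Rightarrow> 'a) \<Rightarrow> 'g) set" where
  "orbit1 W b G u = {cochain_act W G c u | c. c \<in> cochain0 W b G}"

definition H1 :: "'a topology \<Rightarrow> 'a \<Rightarrow> ('g, 'm) monoid_scheme \<Rightarrow> ((real \<Rightarrow> 'a) \<Rightarrow> 'g) set set" where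
  "H1 W b G = orbit1 W b G ` cocycle1 W b G"

definition res1 :: "'a topology \<Rightarrow> 'a \<Rightarrow> ('g, 'm) monoid_scheme \<Rightarrow> 'a set
     \<Rightarrow> ((real \<Rightarrow> 'a) \<Rightarrow> 'g) set \<Rightarrow> ((real \<Rightarrow> 'a) \<Rightarrow> 'g) set" where
  "res1 W b G A h = orbit1 (subtopology W A) b G
      (restrict (SOME u. u \<in> h) (Collect (pathin (subtopology W A))))"

end

theory Submission
  imports Defs
begin

text \<open>
  Every path is a product of small subpaths, i.e. subpaths lying in a single member of the
  cover (Lebesgue number lemma), and every path homotopy is a grid of small squares. Hence a
  cocycle on \<open>X\<close> is determined by its values on small paths, and a family of local cocycles that
  agree on common paths extends to a cocycle on \<open>X\<close>.

  Uniqueness: if two cocycles on \<open>X\<close> are cohomologous on every \<open>U\<close>, the local 0-cochain relating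
  them is forced to be \<open>c(x) = u(g)\<inverse> u'(g)\<close> for any path \<open>g\<close> from \<open>b\<close> to \<open>x\<close> in \<open>U\<close>; since
  \<open>U \<inter> V\<close> is path-connected, these local cochains agree on overlaps and glue.

  Existence: for representatives \<open>u\<^sub>U\<close> the same formula defines transition functions
  \<open>\<theta>\<^sub>U\<^sub>V\<close> on \<open>U \<inter> V\<close>, and path-connectedness of triple intersections gives
  \<open>\<theta>\<^sub>U\<^sub>V \<theta>\<^sub>V\<^sub>W = \<theta>\<^sub>U\<^sub>W\<close>. Choosing for each point \<open>x\<close> a member \<open>home x\<close> containing it
  and twisting each \<open>u\<^sub>U\<close> by the 0-cochain \<open>x \<mapsto> \<theta>\<^bsub>home x, U\<^esub>(x)\<close> makes the local
  cocycles agree on common paths.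
\<close>

section \<open>Subpaths and concatenation\<close>

definition subpath_map :: "(real \<Rightarrow> 'a) \<Rightarrow> real \<Rightarrow> real \<Rightarrow> real \<Rightarrow> 'a" where
  "subpath_map q r t = q \<circ> linepath r t"

definition uniform_piece :: "(real \<Rightarrow> 'a) \<Rightarrow> nat \<Rightarrow> nat \<Rightarrow> real \<Rightarrow> 'a" where
  "uniform_piece q n i = subpath_map q (real i / real n) (real (Suc i) / real n)"

lemma subpath_map_apply: "subpath_map q r t x = q ((1 - x) * r + x * t)"
  by (simp add: subpath_map_def linepath_def)

lemma subpath_map_0_1 [simp]: "subpath_map q 0 1 = q"
  by (rule ext) (simp add: subpath_map_apply)

lemma subpath_map_trivial: "subpath_map q r r = (\<lambda>x. q r)"
  by (rule ext) (simp add: subpath_map_apply algebra_simps)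

lemma subpath_map_subpath_map:
  "subpath_map (subpath_map q r t) r' t' = subpath_map q ((1 - r') * r + r' * t) ((1 - t') * r + t' * t)"
  by (rule ext) (simp add: subpath_map_apply algebra_simps)

lemma uniform_piece_uniform_piece:
  assumes "0 < n" "0 < m"
  shows "uniform_piece (uniform_piece q n i) m j = uniform_piece q (n * m) (i * m + j)"
proof -
  have "(1 - real j / real m) * (real i / real n) + real j / real m * (real (Suc i) / real n)
      = real (i * m + j) / real (n * m)"
    "(1 - real (Suc j) / real m) * (real i / real n) + real (Suc j) / real m * (real (Suc i) / real n)
      = real (Suc (i * m + j)) / real (n * m)"
    using assms by (simp_all add: field_simps)
  then show ?thesis
    by (simp add: uniform_piece_def subpath_map_subpath_map)
qed

lemma frac_in_unit_interval: "i \<le> n \<Longrightarrow> real i / real n \<in> {0..1}"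
  by (cases "n = 0") (auto simp: field_simps)

lemma frac_Suc_diff: "real (Suc i) / real n - real i / real n = 1 / real n"
  by (simp add: diff_divide_distrib[symmetric])

lemma frac_le_frac_Suc: "real i / real n \<le> real (Suc i) / real n"
  by (simp add: divide_right_mono)

lemma interpolate_in_interval:
  fixes r t :: real
  assumes "x \<in> {0..1}" "r \<le> t"
  shows "(1 - x) * r + x * t \<in> {r..t}"
  using linepath_in_path[OF assms(1), of r t] assms(2)
  by (auto simp: closed_segment_eq_real_ivl linepath_def)

lemma linepath_Pair_same_fst: "linepath (c, a) (c, a') x = (c, (1 - x) * a + x * a')"
  by (simp add: linepath_def algebra_simps)

lemma linepath_Pair_same_snd: "linepath (a, c) (a', c) x = ((1 - x) * a + x * a', c)"
  by (simp add: linepath_def algebra_simps)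

lemma pathin_linepath_unit_interval:
  assumes "r \<in> {0..1}" "t \<in> {0..1::real}"
  shows "pathin (top_of_set {0..1}) (linepath r t)"
proof -
  have "path_image (linepath r t) \<subseteq> {0..1}"
    using assms by (simp add: closed_segment_subset convex_real_interval)
  then show ?thesis
    by (auto simp: pathin_canon_iff path_image_def)
qed

lemma pathin_subpath_map:
  assumes "pathin W q" "r \<in> {0..1}" "t \<in> {0..1::real}"
  shows "pathin W (subpath_map q r t)"
  unfolding subpath_map_def
  using pathin_compose[OF pathin_linepath_unit_interval[OF assms(2,3)]] assms(1)
  by (simp add: pathin_def)

lemma pathin_uniform_piece: "pathin W q \<Longrightarrow> i < n \<Longrightarrow> pathin W (uniform_piece q n i)"
  unfolding uniform_piece_def by (rule pathin_subpath_map) (auto intro: frac_in_unit_interval)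

lemma pathin_comp_path:
  fixes \<sigma> :: "real \<Rightarrow> 'b::real_normed_vector"
  assumes "continuous_map (top_of_set S) W f" "path \<sigma>" "path_image \<sigma> \<subseteq> S"
  shows "pathin W (f \<circ> \<sigma>)"
  by (rule pathin_compose[OF _ assms(1)])
    (use assms(2,3) in \<open>auto simp: pathin_canon_iff path_image_def\<close>)

lemma pathin_comp_linepath:
  fixes a c :: "'b::real_normed_vector"
  assumes "convex S" "continuous_map (top_of_set S) W f" "a \<in> S" "c \<in> S"
  shows "pathin W (f \<circ> linepath a c)"
  by (rule pathin_comp_path[OF assms(2)]) (use assms in \<open>simp_all add: closed_segment_subset\<close>)

lemma path_homotopic_comp_convex:
  fixes \<sigma>1 \<sigma>2 :: "real \<Rightarrow> 'b::real_normed_vector"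
  assumes S: "convex S" and f: "continuous_map (top_of_set S) W f"
    and p: "path \<sigma>1" "path \<sigma>2" "path_image \<sigma>1 \<subseteq> S" "path_image \<sigma>2 \<subseteq> S"
    and e: "\<sigma>1 0 = \<sigma>2 0" "\<sigma>1 1 = \<sigma>2 1"
  shows "path_homotopic W (f \<circ> \<sigma>1) (f \<circ> \<sigma>2)"
proof -
  have "homotopic_paths S \<sigma>1 \<sigma>2"
  proof (rule homotopic_paths_linear)
    show "pathstart \<sigma>2 = pathstart \<sigma>1" "pathfinish \<sigma>2 = pathfinish \<sigma>1"
      using e by (auto simp: pathstart_def pathfinish_def)
    fix t :: real assume "t \<in> {0..1}"
    then have "\<sigma>1 t \<in> S" "\<sigma>2 t \<in> S" using p by (auto simp: path_image_def)
    then show "closed_segment (\<sigma>1 t) (\<sigma>2 t) \<subseteq> S" using S by (simp add: closed_segment_subset)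
  qed (use p in auto)
  then have "homotopic_with (\<lambda>h. h 0 = (f \<circ> \<sigma>1) 0 \<and> h 1 = (f \<circ> \<sigma>1) 1) (top_of_set {0..1}) W
               (f \<circ> \<sigma>1) (f \<circ> \<sigma>2)"
    unfolding homotopic_paths_def
    by (rule homotopic_with_compose_continuous_map_left[OF _ f])
       (auto simp: pathstart_def pathfinish_def)
  then show ?thesis by (simp add: path_homotopic_def)
qed

lemma path_homotopic_endpoints: "path_homotopic W p q \<Longrightarrow> q 0 = p 0 \<and> q 1 = p 1"
  unfolding path_homotopic_def by (drule homotopic_with_imp_property) simp

lemma path_homotopic_subtopology: "path_homotopic (subtopology W A) p q \<Longrightarrow> path_homotopic W p q"
  unfolding path_homotopic_def homotopic_with_def by (auto simp: continuous_map_in_subtopology)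

lemma path_homotopic_eq_on_unit_interval:
  assumes "pathin W p" "\<And>x. x \<in> {0..1} \<Longrightarrow> q x = p x"
  shows "pathin W q \<and> path_homotopic W q p"
proof
  show q: "pathin W q"
    unfolding pathin_def by (rule continuous_map_eq[of _ _ p]) (use assms in \<open>auto simp: pathin_def\<close>)
  show "path_homotopic W q p"
    unfolding path_homotopic_def
    by (rule homotopic_with_equal) (use assms q in \<open>auto simp: pathin_def\<close>)
qed

lemma path_cat_0 [simp]: "path_cat p q 0 = p 0"
  by (simp add: path_cat_def)

lemma path_cat_1 [simp]: "path_cat p q 1 = q 1"
  by (simp add: path_cat_def)

lemma path_cat_comp: "path_cat (f \<circ> \<sigma>1) (f \<circ> \<sigma>2) = f \<circ> (\<sigma>1 +++ \<sigma>2)"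
  by (rule ext) (simp add: path_cat_def joinpaths_def)

lemma pathin_path_cat:
  assumes p: "pathin W p" and q: "pathin W q" and e: "p 1 = q 0"
  shows "pathin W (path_cat p q)"
proof -
  have "continuous_map (top_of_set {0..1/2::real}) (top_of_set {0..1}) (\<lambda>x. 2 * x)"
    by (auto intro!: continuous_intros)
  from continuous_map_compose[OF this p[unfolded pathin_def]]
  have f1: "continuous_map (top_of_set {0..1/2::real}) W (\<lambda>x. p (2 * x))"
    by (simp add: o_def)
  have "continuous_map (top_of_set {1/2..1::real}) (top_of_set {0..1}) (\<lambda>x. 2 * x - 1)"
    by (auto intro!: continuous_intros)
  from continuous_map_compose[OF this q[unfolded pathin_def]]
  have f2: "continuous_map (top_of_set {1/2..1::real}) W (\<lambda>x. q (2 * x - 1))"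
    by (simp add: o_def)
  have halves: "{0..1} \<inter> {x. 0 \<le> x \<and> x \<le> 1 \<and> x * 2 \<le> 1} = {0..1/2::real}"
     "{0..1} \<inter> {x. 0 \<le> x \<and> x \<le> 1 \<and> 1 \<le> x * 2} = {1/2..1::real}" by auto
  have "continuous_map (top_of_set {0..1}) W (\<lambda>x. if x \<le> 1/2 then p (2 * x) else q (2 * x - 1))"
    by (rule continuous_map_cases_le[where p = "\<lambda>x. x" and q = "\<lambda>x. 1/2"])
      (simp_all add: subtopology_subtopology f1 f2 halves continuous_map_from_subtopology,
       use e in \<open>simp add: mult.commute\<close>)
  then show ?thesis by (simp add: pathin_def path_cat_def)
qed

lemma uniform_piece_path_cat_left:
  assumes i: "i < n" and x: "x \<in> {0..1}"
  shows "uniform_piece (path_cat p q) (n + n) i x = uniform_piece p n i x"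
proof -
  let ?y = "(1 - x) * (real i / real (n + n)) + x * (real (Suc i) / real (n + n))"
  have "?y \<le> real (Suc i) / real (n + n)"
    using interpolate_in_interval[OF x frac_le_frac_Suc[of i "n + n"]] by (simp del: of_nat_Suc)
  also have "\<dots> \<le> 1 / 2"
    using i by (simp add: field_simps)
  finally have "?y \<le> 1 / 2" .
  moreover have "2 * ?y = (1 - x) * (real i / real n) + x * (real (Suc i) / real n)"
    using i by (simp add: field_simps)
  ultimately show ?thesis
    by (simp add: uniform_piece_def subpath_map_apply path_cat_def)
qed

lemma uniform_piece_path_cat_right:
  assumes e: "p 1 = q 0" and i: "i < n" and x: "x \<in> {0..1}"
  shows "uniform_piece (path_cat p q) (n + n) (n + i) x = uniform_piece q n i x"
proof -
  let ?y = "(1 - x) * (real (n + i) / real (n + n)) + x * (real (Suc (n + i)) / real (n + n))"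
  have "1 / 2 \<le> real (n + i) / real (n + n)"
    using i by (simp add: field_simps)
  also have "\<dots> \<le> ?y"
    using interpolate_in_interval[OF x frac_le_frac_Suc[of "n + i" "n + n"]] by (simp del: of_nat_Suc)
  finally have y: "1 / 2 \<le> ?y" .
  have y': "2 * ?y - 1 = (1 - x) * (real i / real n) + x * (real (Suc i) / real n)"
    using i by (simp add: field_simps)
  show ?thesis
  proof (cases "?y \<le> 1 / 2")
    case True
    then have "2 * ?y = 1" "2 * ?y - 1 = 0"
      using y by simp_all
    then show ?thesis
      using True e y' by (simp add: uniform_piece_def subpath_map_apply path_cat_def)
  next
    case False
    then show ?thesis
      using y' by (simp add: uniform_piece_def subpath_map_apply path_cat_def)
  qed
qed

lemma pathin_subtopology_mono: "pathin (subtopology X S) g \<Longrightarrow> S \<subseteq> T \<Longrightarrow> pathin (subtopology X T) g"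
  by (auto simp: pathin_subtopology)

lemma path_connectedin_obtain_path:
  assumes "path_connectedin X S" "x \<in> S" "y \<in> S"
  obtains g where "pathin (subtopology X S) g" "g 0 = x" "g 1 = y"
proof -
  obtain g where "pathin X g" "g \<in> {0..1} \<rightarrow> S" "g 0 = x" "g 1 = y"
    using assms unfolding path_connectedin by blast
  then show ?thesis using that by (auto simp: pathin_subtopology)
qed

section \<open>Ordered products in a monoid\<close>

fun ordered_prod :: "('g, 'm) monoid_scheme \<Rightarrow> (nat \<Rightarrow> 'g) \<Rightarrow> nat \<Rightarrow> 'g" where
  "ordered_prod G f 0 = \<one>\<^bsub>G\<^esub>"
| "ordered_prod G f (Suc n) = ordered_prod G f n \<otimes>\<^bsub>G\<^esub> f n"

context monoid
begin

lemma ordered_prod_closed: "(\<And>i. i < n \<Longrightarrow> f i \<in> carrier G) \<Longrightarrow> ordered_prod G f n \<in> carrier G"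
  by (induction n) auto

lemma ordered_prod_cong: "(\<And>i. i < n \<Longrightarrow> f i = g i) \<Longrightarrow> ordered_prod G f n = ordered_prod G g n"
  by (induction n) auto

lemma ordered_prod_add:
  "(\<And>i. i < n + m \<Longrightarrow> f i \<in> carrier G) \<Longrightarrow>
     ordered_prod G f (n + m) = ordered_prod G f n \<otimes> ordered_prod G (\<lambda>i. f (n + i)) m"
  by (induction m) (auto simp: m_assoc ordered_prod_closed)

lemma ordered_prod_mult:
  "(\<And>i. i < n * m \<Longrightarrow> f i \<in> carrier G) \<Longrightarrow>
     ordered_prod G f (n * m) = ordered_prod G (\<lambda>i. ordered_prod G (\<lambda>j. f (i * m + j)) m) n"
proof (induction n)
  case (Suc n)
  have "ordered_prod G f (Suc n * m) = ordered_prod G f (n * m + m)"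
    by (simp add: add.commute)
  also have "\<dots> = ordered_prod G f (n * m) \<otimes> ordered_prod G (\<lambda>j. f (n * m + j)) m"
    by (rule ordered_prod_add) (use Suc.prems in \<open>simp add: add.commute\<close>)
  finally show ?case
    using Suc by simp
qed simp

lemma ordered_prod_telescope:
  assumes "\<And>i. i < n \<Longrightarrow> b i \<in> carrier G" "\<And>i. i \<le> n \<Longrightarrow> a i \<in> carrier G"
    "\<And>i. i < n \<Longrightarrow> t i \<in> carrier G" "\<And>i. i < n \<Longrightarrow> b i \<otimes> a (Suc i) = a i \<otimes> t i"
  shows "ordered_prod G b n \<otimes> a n = a 0 \<otimes> ordered_prod G t n"
  using assms
proof (induction n)
  case (Suc n)
  have IH: "ordered_prod G b n \<otimes> a n = a 0 \<otimes> ordered_prod G t n"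
    using Suc by simp
  have closed: "ordered_prod G b n \<in> carrier G" "ordered_prod G t n \<in> carrier G"
    using Suc.prems by (auto intro!: ordered_prod_closed)
  have "ordered_prod G b (Suc n) \<otimes> a (Suc n) = ordered_prod G b n \<otimes> (a n \<otimes> t n)"
    using Suc.prems closed by (simp add: m_assoc)
  also have "\<dots> = a 0 \<otimes> ordered_prod G t (Suc n)"
    using IH Suc.prems closed by (simp flip: m_assoc)
  finally show ?case .
qed simp

end

section \<open>Cocycles\<close>

lemma cocycle1_carrier: "u \<in> cocycle1 W b G \<Longrightarrow> pathin W p \<Longrightarrow> u p \<in> carrier G"
  by (auto simp: cocycle1_def)

lemma cocycle1_undefined: "u \<in> cocycle1 W b G \<Longrightarrow> \<not> pathin W p \<Longrightarrow> u p = undefined"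
  by (auto simp: cocycle1_def PiE_def extensional_def)

lemma cocycle1_homotopic:
  "u \<in> cocycle1 W b G \<Longrightarrow> pathin W p \<Longrightarrow> pathin W q \<Longrightarrow> path_homotopic W p q \<Longrightarrow> u p = u q"
  by (auto simp: cocycle1_def)

lemma cocycle1_path_cat:
  "u \<in> cocycle1 W b G \<Longrightarrow> pathin W p \<Longrightarrow> pathin W q \<Longrightarrow> p 1 = q 0 \<Longrightarrow>
     u (path_cat p q) = u p \<otimes>\<^bsub>G\<^esub> u q"
  by (auto simp: cocycle1_def)

lemma cocycle1_eq_on_unit_interval:
  assumes "u \<in> cocycle1 W b G" "pathin W p" "\<And>x. x \<in> {0..1} \<Longrightarrow> q x = p x"
  shows "pathin W q \<and> u q = u p"
  using path_homotopic_eq_on_unit_interval[OF assms(2,3)] cocycle1_homotopic[OF assms(1)] assms(2)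
  by blast

context group
begin

lemma cocycle1_const:
  assumes u: "u \<in> cocycle1 W b G" and a: "a \<in> topspace W"
  shows "u (\<lambda>t. a) = \<one>"
proof -
  have "path_cat (\<lambda>t. a) (\<lambda>t. a) = (\<lambda>t. a)"
    by (simp add: path_cat_def)
  then have "u (\<lambda>t. a) = u (\<lambda>t. a) \<otimes> u (\<lambda>t. a)"
    using cocycle1_path_cat[OF u, of "\<lambda>t. a" "\<lambda>t. a"] a by simp
  moreover have "u (\<lambda>t. a) \<in> carrier G"
    using cocycle1_carrier[OF u] a by simp
  ultimately show ?thesis
    by simp
qed

lemma cocycle1_const_on_unit_interval:
  assumes u: "u \<in> cocycle1 W b G" and q: "pathin W q" and const: "\<And>x. x \<in> {0..1} \<Longrightarrow> q x = a"
  shows "u q = \<one>"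
proof -
  have "a \<in> topspace W"
    using path_start_in_topspace[OF q] const[of 0] by simp
  moreover have "u (\<lambda>t. a) = u q"
    using cocycle1_eq_on_unit_interval[OF u q, of "\<lambda>t. a"] const by simp
  ultimately show ?thesis
    using cocycle1_const[OF u] by simp
qed

lemma cocycle1_subpath_map_split:
  assumes u: "u \<in> cocycle1 W b G" and q: "pathin W q"
    and rst: "r \<in> {0..1}" "s \<in> {0..1}" "t \<in> {0..1::real}"
  shows "u (subpath_map q r t) = u (subpath_map q r s) \<otimes> u (subpath_map q s t)"
proof -
  have qc: "continuous_map (top_of_set {0..1}) W q"
    using q by (simp add: pathin_def)
  have images: "path_image (linepath r t) \<subseteq> {0..1}" "path_image (linepath r s +++ linepath s t) \<subseteq> {0..1}"
    using rst by (simp_all add: path_image_join closed_segment_subset convex_real_interval)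
  have "path_homotopic W (q \<circ> linepath r t) (q \<circ> (linepath r s +++ linepath s t))"
    by (rule path_homotopic_comp_convex[OF convex_real_interval(5) qc _ _ images])
      (simp, simp, simp_all add: joinpaths_def linepath_def)
  moreover have "pathin W (q \<circ> (linepath r s +++ linepath s t))"
    by (rule pathin_comp_path[OF qc _ images(2)]) simp
  ultimately have "u (subpath_map q r t) = u (q \<circ> (linepath r s +++ linepath s t))"
    using cocycle1_homotopic[OF u] pathin_subpath_map[OF q rst(1,3)] by (simp add: subpath_map_def)
  also have "\<dots> = u (path_cat (subpath_map q r s) (subpath_map q s t))"
    by (simp add: subpath_map_def path_cat_comp)
  also have "\<dots> = u (subpath_map q r s) \<otimes> u (subpath_map q s t)"
    by (rule cocycle1_path_cat[OF u]) (use pathin_subpath_map q rst in \<open>auto simp: subpath_map_apply\<close>)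
  finally show ?thesis .
qed

lemma cocycle1_uniform_subdivision:
  assumes u: "u \<in> cocycle1 W b G" and q: "pathin W q" and m: "0 < m"
  shows "u q = ordered_prod G (\<lambda>j. u (uniform_piece q m j)) m"
proof -
  have "k \<le> m \<Longrightarrow> u (subpath_map q 0 (real k / real m)) = ordered_prod G (\<lambda>j. u (uniform_piece q m j)) k"
    for k
  proof (induction k)
    case 0
    then show ?case
      using cocycle1_const[OF u] path_start_in_topspace[OF q] by (simp add: subpath_map_trivial)
  next
    case (Suc k)
    then have "u (subpath_map q 0 (real (Suc k) / real m))
        = u (subpath_map q 0 (real k / real m)) \<otimes> u (uniform_piece q m k)"
      unfolding uniform_piece_def
      by (intro cocycle1_subpath_map_split[OF u q]) (auto intro: frac_in_unit_interval)
    then show ?case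
      using Suc by simp
  qed
  from this[of m] m show ?thesis
    by simp
qed

lemma cocycle1_square:
  fixes a b1 b2 d :: "'v::real_normed_vector"
  assumes u: "u \<in> cocycle1 W b G" and S: "convex S" and f: "continuous_map (top_of_set S) W f"
    and pts: "a \<in> S" "b1 \<in> S" "b2 \<in> S" "d \<in> S"
  shows "u (f \<circ> linepath a b1) \<otimes> u (f \<circ> linepath b1 d) = u (f \<circ> linepath a b2) \<otimes> u (f \<circ> linepath b2 d)"
proof -
  have edge: "pathin W (f \<circ> linepath x y)" if "x \<in> S" "y \<in> S" for x y
    by (rule pathin_comp_linepath[OF S f that])
  have image: "path_image (linepath x y +++ linepath y z) \<subseteq> S" if "x \<in> S" "y \<in> S" "z \<in> S" for x y z
    using S that by (simp add: path_image_join closed_segment_subset)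
  have join: "pathin W (f \<circ> (linepath x y +++ linepath y z))" if "x \<in> S" "y \<in> S" "z \<in> S" for x y z
    by (rule pathin_comp_path[OF f _ image[OF that]]) simp
  have cat: "u (f \<circ> linepath x y) \<otimes> u (f \<circ> linepath y z) = u (f \<circ> (linepath x y +++ linepath y z))"
    if "x \<in> S" "y \<in> S" "z \<in> S" for x y z
    using cocycle1_path_cat[OF u edge[OF that(1,2)] edge[OF that(2,3)]]
    by (simp add: path_cat_comp linepath_def)
  have "path_homotopic W (f \<circ> (linepath a b1 +++ linepath b1 d)) (f \<circ> (linepath a b2 +++ linepath b2 d))"
    by (rule path_homotopic_comp_convex[OF S f _ _ image[OF pts(1,2,4)] image[OF pts(1,3,4)]])
      (simp, simp, simp_all add: joinpaths_def linepath_def)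
  then show ?thesis
    using cat pts cocycle1_homotopic[OF u join[OF pts(1,2,4)] join[OF pts(1,3,4)]] by simp
qed

section \<open>The action of 0-cochains and the classes \<open>H\<^sup>1\<close>\<close>

lemma inv_mult_cancel_left: "x \<in> carrier G \<Longrightarrow> y \<in> carrier G \<Longrightarrow> inv x \<otimes> (x \<otimes> y) = y"
  by (simp flip: m_assoc)

lemma mult_inv_cancel_left: "x \<in> carrier G \<Longrightarrow> y \<in> carrier G \<Longrightarrow> x \<otimes> (inv x \<otimes> y) = y"
  by (simp flip: m_assoc)

lemma cochain0_carrier: "c \<in> cochain0 W b G \<Longrightarrow> x \<in> topspace W \<Longrightarrow> c x \<in> carrier G"
  by (auto simp: cochain0_def)

lemma cochain0_base: "c \<in> cochain0 W b G \<Longrightarrow> c b = \<one>"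
  by (auto simp: cochain0_def)

lemma one_cochain0: "b \<in> topspace W \<Longrightarrow> (\<lambda>x\<in>topspace W. \<one>) \<in> cochain0 W b G"
  by (auto simp: cochain0_def)

lemma mult_cochain0:
  "c \<in> cochain0 W b G \<Longrightarrow> c' \<in> cochain0 W b G \<Longrightarrow> (\<lambda>x\<in>topspace W. c x \<otimes> c' x) \<in> cochain0 W b G"
  by (auto simp: cochain0_def)

lemma inv_cochain0: "c \<in> cochain0 W b G \<Longrightarrow> (\<lambda>x\<in>topspace W. inv (c x)) \<in> cochain0 W b G"
  by (auto simp: cochain0_def)

lemma cochain_act_apply: "pathin W p \<Longrightarrow> cochain_act W G c u p = c (p 0) \<otimes> u p \<otimes> inv (c (p 1))"
  by (simp add: cochain_act_def)

lemma cochain_act_undefined: "\<not> pathin W p \<Longrightarrow> cochain_act W G c u p = undefined"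
  by (simp add: cochain_act_def)

lemma cochain_act_cocycle1:
  assumes u: "u \<in> cocycle1 W b G" and c: "c \<in> cochain0 W b G" and b: "b \<in> topspace W"
  shows "cochain_act W G c u \<in> cocycle1 W b G"
  unfolding cocycle1_def
proof (intro CollectI conjI allI impI)
  have "c (p 0) \<otimes> u p \<otimes> inv c (p 1) \<in> carrier G" if p: "pathin W p" for p
    using cochain0_carrier[OF c path_start_in_topspace[OF p]]
      cochain0_carrier[OF c path_finish_in_topspace[OF p]] cocycle1_carrier[OF u p] by simp
  then show "cochain_act W G c u \<in> Collect (pathin W) \<rightarrow>\<^sub>E carrier G"
    unfolding cochain_act_def restrict_PiE_iff by simp
  show "cochain_act W G c u (\<lambda>t. b) = \<one>"
    using b cochain0_base[OF c] cocycle1_const[OF u b] by (simp add: cochain_act_apply)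
next
  fix p q assume pq: "pathin W p \<and> pathin W q \<and> path_homotopic W p q"
  then have "u p = u q" "q 0 = p 0" "q 1 = p 1"
    using cocycle1_homotopic[OF u] path_homotopic_endpoints[of W p q] by auto
  with pq show "cochain_act W G c u p = cochain_act W G c u q"
    by (simp add: cochain_act_apply)
next
  fix p q assume pq: "pathin W p \<and> pathin W q \<and> p 1 = q 0"
  then have pc: "pathin W (path_cat p q)"
    using pathin_path_cat by blast
  have closed: "c (p 0) \<in> carrier G" "c (q 0) \<in> carrier G" "c (q 1) \<in> carrier G"
    "u p \<in> carrier G" "u q \<in> carrier G"
    using pq cochain0_carrier[OF c path_start_in_topspace] cochain0_carrier[OF c path_finish_in_topspace]
      cocycle1_carrier[OF u] by auto
  have "cochain_act W G c u (path_cat p q) = c (p 0) \<otimes> (u p \<otimes> u q) \<otimes> inv (c (q 1))"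
    using pq pc cocycle1_path_cat[OF u, of p q] by (simp add: cochain_act_apply)
  also have "\<dots> = (c (p 0) \<otimes> u p \<otimes> inv (c (q 0))) \<otimes> (c (q 0) \<otimes> u q \<otimes> inv (c (q 1)))"
    using closed by (simp add: m_assoc inv_mult_cancel_left)
  finally show "cochain_act W G c u (path_cat p q) = cochain_act W G c u p \<otimes> cochain_act W G c u q"
    using pq by (simp add: cochain_act_apply)
qed

lemma cochain_act_one:
  assumes u: "u \<in> cocycle1 W b G"
  shows "cochain_act W G (\<lambda>x\<in>topspace W. \<one>) u = u"
proof
  fix p
  show "cochain_act W G (\<lambda>x\<in>topspace W. \<one>) u p = u p"
    using cocycle1_carrier[OF u, of p] cocycle1_undefined[OF u, of p]
      path_start_in_topspace[of W p] path_finish_in_topspace[of W p]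
    by (cases "pathin W p") (simp_all add: cochain_act_apply cochain_act_undefined)
qed

lemma cochain_act_cochain_act:
  assumes u: "u \<in> cocycle1 W b G" and c: "c \<in> cochain0 W b G" and c': "c' \<in> cochain0 W b G"
  shows "cochain_act W G c (cochain_act W G c' u) = cochain_act W G (\<lambda>x\<in>topspace W. c x \<otimes> c' x) u"
proof
  fix p
  show "cochain_act W G c (cochain_act W G c' u) p = cochain_act W G (\<lambda>x\<in>topspace W. c x \<otimes> c' x) u p"
  proof (cases "pathin W p")
    case True
    then have ends: "p 0 \<in> topspace W" "p 1 \<in> topspace W"
      by (simp_all add: path_start_in_topspace path_finish_in_topspace)
    then have "c (p 0) \<in> carrier G" "c (p 1) \<in> carrier G" "c' (p 0) \<in> carrier G" "c' (p 1) \<in> carrier G"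
      using cochain0_carrier[OF c] cochain0_carrier[OF c'] by blast+
    then show ?thesis
      using True ends cocycle1_carrier[OF u True] by (simp add: cochain_act_apply m_assoc inv_mult_group)
  qed (simp add: cochain_act_undefined)
qed

lemma cochain_act_inv:
  assumes u: "u \<in> cocycle1 W b G" and c: "c \<in> cochain0 W b G"
  shows "cochain_act W G (\<lambda>x\<in>topspace W. inv (c x)) (cochain_act W G c u) = u"
proof -
  have "(\<lambda>x\<in>topspace W. (\<lambda>x\<in>topspace W. inv (c x)) x \<otimes> c x) = (\<lambda>x\<in>topspace W. \<one>)"
    using cochain0_carrier[OF c] by (auto simp: fun_eq_iff)
  then show ?thesis
    using cochain_act_cochain_act[OF u inv_cochain0[OF c] c] cochain_act_one[OF u] by simp
qed

lemma orbit1_self: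
  assumes "b \<in> topspace W" "u \<in> cocycle1 W b G"
  shows "u \<in> orbit1 W b G u"
  unfolding orbit1_def using one_cochain0[OF assms(1)] cochain_act_one[OF assms(2)] by force

lemma orbit1_cocycle1:
  assumes "b \<in> topspace W" "u \<in> cocycle1 W b G" "w \<in> orbit1 W b G u"
  shows "w \<in> cocycle1 W b G"
proof -
  obtain c where "c \<in> cochain0 W b G" "w = cochain_act W G c u"
    using assms(3) by (auto simp: orbit1_def)
  then show ?thesis
    using cochain_act_cocycle1 assms(1,2) by simp
qed

lemma orbit1_eq:
  assumes b: "b \<in> topspace W" and u: "u \<in> cocycle1 W b G" and w: "w \<in> orbit1 W b G u"
  shows "orbit1 W b G w = orbit1 W b G u"
proof -
  obtain c where c: "c \<in> cochain0 W b G" and wc: "w = cochain_act W G c u"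
    using w by (auto simp: orbit1_def)
  show ?thesis
  proof
    show "orbit1 W b G w \<subseteq> orbit1 W b G u"
    proof
      fix z assume "z \<in> orbit1 W b G w"
      then obtain d where d: "d \<in> cochain0 W b G" and z: "z = cochain_act W G d w"
        by (auto simp: orbit1_def)
      have "z = cochain_act W G (\<lambda>x\<in>topspace W. d x \<otimes> c x) u"
        using z wc cochain_act_cochain_act[OF u d c] by simp
      then show "z \<in> orbit1 W b G u"
        unfolding orbit1_def using mult_cochain0[OF d c] by blast
    qed
    show "orbit1 W b G u \<subseteq> orbit1 W b G w"
    proof
      fix z assume "z \<in> orbit1 W b G u"
      then obtain d where d: "d \<in> cochain0 W b G" and z: "z = cochain_act W G d u"
        by (auto simp: orbit1_def)
      have "z = cochain_act W G d (cochain_act W G (\<lambda>x\<in>topspace W. inv (c x)) w)"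
        using cochain_act_inv[OF u c] z wc by simp
      also have "\<dots> = cochain_act W G (\<lambda>x\<in>topspace W. d x \<otimes> (\<lambda>x\<in>topspace W. inv (c x)) x) w"
        using cochain_act_cochain_act[OF cochain_act_cocycle1[OF u c b] d inv_cochain0[OF c]] wc by simp
      finally show "z \<in> orbit1 W b G w"
        unfolding orbit1_def using mult_cochain0[OF d inv_cochain0[OF c]] by blast
    qed
  qed
qed

lemma orbit1_eq_obtain_cochain0:
  assumes b: "b \<in> topspace W" and u: "u \<in> cocycle1 W b G" and u': "u' \<in> cocycle1 W b G"
    and eq: "orbit1 W b G u = orbit1 W b G u'"
  obtains c where "c \<in> cochain0 W b G"
    "\<And>p. pathin W p \<Longrightarrow> u p = c (p 0) \<otimes> u' p \<otimes> inv (c (p 1))"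
    "\<And>g. pathin W g \<Longrightarrow> g 0 = b \<Longrightarrow> c (g 1) = inv (u g) \<otimes> u' g"
proof -
  obtain c where c: "c \<in> cochain0 W b G" and uc: "u = cochain_act W G c u'"
    using orbit1_self[OF b u] eq by (auto simp: orbit1_def)
  have rel: "u p = c (p 0) \<otimes> u' p \<otimes> inv (c (p 1))" if "pathin W p" for p
    using uc that by (simp add: cochain_act_apply)
  have "c (g 1) = inv (u g) \<otimes> u' g" if g: "pathin W g" "g 0 = b" for g
  proof -
    have closed: "c (g 1) \<in> carrier G" "u' g \<in> carrier G"
      using cochain0_carrier[OF c path_finish_in_topspace[OF g(1)]] cocycle1_carrier[OF u' g(1)] by auto
    have "u g = u' g \<otimes> inv (c (g 1))"
      using rel[OF g(1)] g(2) cochain0_base[OF c] closed by simp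
    then show ?thesis
      using closed by (simp add: inv_mult_group m_assoc)
  qed
  with that c rel show ?thesis
    by blast
qed

lemma H1_memberD:
  assumes b: "b \<in> topspace W" and h: "h \<in> H1 W b G" and w: "w \<in> h"
  shows "w \<in> cocycle1 W b G \<and> orbit1 W b G w = h"
proof -
  obtain u where u: "u \<in> cocycle1 W b G" and hu: "h = orbit1 W b G u"
    using h by (auto simp: H1_def)
  then show ?thesis
    using w orbit1_cocycle1[OF b u] orbit1_eq[OF b u] by simp
qed

lemma H1_some_in:
  assumes b: "b \<in> topspace W" and h: "h \<in> H1 W b G"
  shows "(SOME u. u \<in> h) \<in> h"
proof -
  obtain u where "u \<in> cocycle1 W b G" "h = orbit1 W b G u"
    using h by (auto simp: H1_def)
  then have "u \<in> h"
    using orbit1_self[OF b] by simp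
  then show ?thesis
    using someI[of "\<lambda>u. u \<in> h" u] by simp
qed

lemma orbit1_in_H1: "u \<in> cocycle1 W b G \<Longrightarrow> orbit1 W b G u \<in> H1 W b G"
  by (simp add: H1_def)

section \<open>Restriction to a subspace\<close>

lemma cocycle1_restrict:
  assumes u: "u \<in> cocycle1 W b G" and bA: "b \<in> A" and b: "b \<in> topspace W"
  shows "restrict u (Collect (pathin (subtopology W A))) \<in> cocycle1 (subtopology W A) b G"
  unfolding cocycle1_def
proof (intro CollectI conjI allI impI)
  show "restrict u (Collect (pathin (subtopology W A))) \<in> Collect (pathin (subtopology W A)) \<rightarrow>\<^sub>E carrier G"
    unfolding restrict_PiE_iff using cocycle1_carrier[OF u] by (simp add: pathin_subtopology)
  show "restrict u (Collect (pathin (subtopology W A))) (\<lambda>t. b) = \<one>"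
    using cocycle1_const[OF u b] b bA by simp
next
  fix p q
  assume "pathin (subtopology W A) p \<and> pathin (subtopology W A) q \<and> path_homotopic (subtopology W A) p q"
  then show "restrict u (Collect (pathin (subtopology W A))) p = restrict u (Collect (pathin (subtopology W A))) q"
    using cocycle1_homotopic[OF u, of p q] path_homotopic_subtopology[of W A p q]
    by (simp add: pathin_subtopology)
next
  fix p q assume pq: "pathin (subtopology W A) p \<and> pathin (subtopology W A) q \<and> p 1 = q 0"
  then have "pathin (subtopology W A) (path_cat p q)"
    using pathin_path_cat by blast
  with pq show "restrict u (Collect (pathin (subtopology W A))) (path_cat p q) =
    restrict u (Collect (pathin (subtopology W A))) p \<otimes> restrict u (Collect (pathin (subtopology W A))) q"
    using cocycle1_path_cat[OF u, of p q] by (auto simp: pathin_subtopology)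
qed

lemma cochain_act_restrict:
  "restrict (cochain_act W G c u) (Collect (pathin (subtopology W A))) =
    cochain_act (subtopology W A) G (restrict c (topspace (subtopology W A)))
      (restrict u (Collect (pathin (subtopology W A))))"
proof
  fix p
  show "restrict (cochain_act W G c u) (Collect (pathin (subtopology W A))) p =
    cochain_act (subtopology W A) G (restrict c (topspace (subtopology W A)))
      (restrict u (Collect (pathin (subtopology W A)))) p"
    using path_start_in_topspace[of "subtopology W A" p] path_finish_in_topspace[of "subtopology W A" p]
    by (cases "pathin (subtopology W A) p")
      (auto simp: cochain_act_apply cochain_act_undefined pathin_subtopology)
qed

lemma res1_eq_orbit1:
  assumes b: "b \<in> topspace W" and bA: "b \<in> A" and h: "h \<in> H1 W b G" and u: "u \<in> h"
  shows "res1 W b G A h = orbit1 (subtopology W A) b G (restrict u (Collect (pathin (subtopology W A))))"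
proof -
  let ?w = "SOME u. u \<in> h"
  have uc: "u \<in> cocycle1 W b G" "orbit1 W b G u = h"
    using H1_memberD[OF b h u] by auto
  then obtain c where c: "c \<in> cochain0 W b G" and wc: "?w = cochain_act W G c u"
    using H1_some_in[OF b h] by (auto simp: orbit1_def)
  have "restrict c (topspace (subtopology W A)) \<in> cochain0 (subtopology W A) b G"
    using c bA by (auto simp: cochain0_def)
  then have "restrict ?w (Collect (pathin (subtopology W A)))
      \<in> orbit1 (subtopology W A) b G (restrict u (Collect (pathin (subtopology W A))))"
    unfolding wc cochain_act_restrict orbit1_def by blast
  then show ?thesis
    unfolding res1_def using b bA by (intro orbit1_eq cocycle1_restrict[OF uc(1)]) auto
qed

lemma res1_res1:
  assumes b: "b \<in> topspace W" and bB: "b \<in> B" and BA: "B \<subseteq> A" and h: "h \<in> H1 W b G"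
  shows "res1 (subtopology W A) b G B (res1 W b G A h) = res1 W b G B h"
proof -
  obtain u where u: "u \<in> h"
    using H1_some_in[OF b h] by blast
  let ?uA = "restrict u (Collect (pathin (subtopology W A)))"
  have bA: "b \<in> A" and b': "b \<in> topspace (subtopology W A)"
    using b bB BA by auto
  have uA: "?uA \<in> cocycle1 (subtopology W A) b G"
    using H1_memberD[OF b h u] bA b by (intro cocycle1_restrict) auto
  have "res1 (subtopology W A) b G B (res1 W b G A h) =
     orbit1 (subtopology (subtopology W A) B) b G
       (restrict ?uA (Collect (pathin (subtopology (subtopology W A) B))))"
    unfolding res1_eq_orbit1[OF b bA h u]
    by (rule res1_eq_orbit1[OF b' bB orbit1_in_H1[OF uA] orbit1_self[OF b' uA]])
  also have "subtopology (subtopology W A) B = subtopology W B"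
    using BA by (simp add: subtopology_subtopology Int_absorb1)
  also have "restrict ?uA (Collect (pathin (subtopology W B))) = restrict u (Collect (pathin (subtopology W B)))"
    using BA by (auto simp: fun_eq_iff pathin_subtopology)
  finally show ?thesis
    using res1_eq_orbit1[OF b bB h u] by (simp add: restrict_def)
qed

end

section \<open>Small paths and fine subdivisions\<close>

definition small_path :: "'a topology \<Rightarrow> 'a set set \<Rightarrow> (real \<Rightarrow> 'a) \<Rightarrow> bool" where
  "small_path X \<U> q \<longleftrightarrow> (\<exists>U\<in>\<U>. pathin (subtopology X U) q)"

definition fine_subdivision :: "'a topology \<Rightarrow> 'a set set \<Rightarrow> (real \<Rightarrow> 'a) \<Rightarrow> nat \<Rightarrow> bool" where
  "fine_subdivision X \<U> p n \<longleftrightarrow> 0 < n \<and> (\<forall>i<n. small_path X \<U> (uniform_piece p n i))"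

lemma small_path_uniform_piece: "small_path X \<U> q \<Longrightarrow> j < m \<Longrightarrow> small_path X \<U> (uniform_piece q m j)"
  unfolding small_path_def by (auto intro: pathin_uniform_piece)

lemma Lebesgue_number_continuous_map:
  fixes S :: "'b::metric_space set"
  assumes S: "compact S" and f: "continuous_map (top_of_set S) X f"
    and opn: "\<And>U. U \<in> \<U> \<Longrightarrow> openin X U" and cover: "\<Union>\<U> = topspace X" and ne: "\<U> \<noteq> {}"
  obtains \<delta> where "0 < \<delta>" "\<And>T. T \<subseteq> S \<Longrightarrow> diameter T < \<delta> \<Longrightarrow> \<exists>U\<in>\<U>. f ` T \<subseteq> U"
proof -
  define C where "C = {B. open B \<and> (\<exists>U\<in>\<U>. f ` (S \<inter> B) \<subseteq> U)}"
  have "{} \<in> C"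
    using ne unfolding C_def by auto
  then have C_ne: "C \<noteq> {}"
    by auto
  have C_cover: "S \<subseteq> \<Union>C"
  proof
    fix z assume z: "z \<in> S"
    then have "f z \<in> topspace X"
      using f by (auto simp: continuous_map_def)
    then obtain U where U: "U \<in> \<U>" "f z \<in> U"
      using cover by auto
    have "openin (top_of_set S) {x \<in> topspace (top_of_set S). f x \<in> U}"
      by (rule openin_continuous_map_preimage[OF f opn[OF U(1)]])
    then obtain T where T: "open T" "{x \<in> S. f x \<in> U} = S \<inter> T"
      by (auto simp: openin_open)
    have "f ` (S \<inter> T) \<subseteq> U"
      using T(2) by auto
    then have "T \<in> C"
      unfolding C_def using T(1) U(1) by auto
    moreover have "z \<in> T"
      using T(2) z U(2) by auto
    ultimately show "z \<in> \<Union>C"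
      by auto
  qed
  have C_open: "\<And>B. B \<in> C \<Longrightarrow> open B"
    unfolding C_def by auto
  obtain \<delta> where \<delta>: "0 < \<delta>" "\<And>T. T \<subseteq> S \<Longrightarrow> diameter T < \<delta> \<Longrightarrow> \<exists>B \<in> C. T \<subseteq> B"
    using Lebesgue_number_lemma[OF S C_ne C_cover C_open] by metis
  show ?thesis
  proof (rule that[OF \<delta>(1)])
    fix T assume T: "T \<subseteq> S" "diameter T < \<delta>"
    obtain B where "B \<in> C" "T \<subseteq> B"
      using \<delta>(2)[OF T] by blast
    then obtain U where "U \<in> \<U>" "f ` (S \<inter> B) \<subseteq> U"
      unfolding C_def by auto
    with T(1) \<open>T \<subseteq> B\<close> show "\<exists>U\<in>\<U>. f ` T \<subseteq> U"
      by blast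
  qed
qed

lemma pathin_subtopology_uniform_piece:
  assumes "pathin X p" "i < n" "p ` {real i / real n .. real (Suc i) / real n} \<subseteq> U"
  shows "pathin (subtopology X U) (uniform_piece p n i)"
proof -
  have "uniform_piece p n i x \<in> U" if "x \<in> {0..1}" for x
    using assms(3) interpolate_in_interval[OF that frac_le_frac_Suc[of i n]]
    by (auto simp: uniform_piece_def subpath_map_apply)
  then show ?thesis
    using pathin_uniform_piece[OF assms(1,2)] by (simp add: pathin_subtopology)
qed

lemma eventually_fine_subdivision:
  assumes p: "pathin X p"
    and opn: "\<And>U. U \<in> \<U> \<Longrightarrow> openin X U" and cover: "\<Union>\<U> = topspace X" and ne: "\<U> \<noteq> {}"
  shows "\<forall>\<^sub>F n in sequentially. fine_subdivision X \<U> p n"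
proof -
  obtain \<delta> where \<delta>: "0 < \<delta>" "\<And>T. T \<subseteq> {0..1} \<Longrightarrow> diameter T < \<delta> \<Longrightarrow> \<exists>U\<in>\<U>. p ` T \<subseteq> U"
    using Lebesgue_number_continuous_map[OF compact_Icc p[unfolded pathin_def] opn cover ne] by blast
  obtain N :: nat where N: "1 / \<delta> < real N"
    using reals_Archimedean2 by blast
  have "fine_subdivision X \<U> p n" if n: "N \<le> n" for n
  proof -
    have "0 < real N"
      using N \<delta>(1) by (smt (verit) divide_pos_pos)
    then have n0: "0 < n"
      using n by simp
    have "1 / \<delta> < real n"
      using N n by linarith
    then have small: "1 / real n < \<delta>"
      using \<delta>(1) n0 by (simp add: field_simps)
    have "small_path X \<U> (uniform_piece p n i)" if i: "i < n" for i
    proof -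
      let ?r = "real i / real n" and ?t = "real (Suc i) / real n"
      have "{?r..?t} \<subseteq> {0..1}"
        using frac_in_unit_interval[of i n] frac_in_unit_interval[of "Suc i" n] i by auto
      moreover have "diameter {?r..?t} = 1 / real n"
        using frac_le_frac_Suc[of i n] frac_Suc_diff[of i n] by (simp del: of_nat_Suc)
      then have "diameter {?r..?t} < \<delta>"
        using small by simp
      ultimately
      obtain U where U: "U \<in> \<U>" "p ` {?r..?t} \<subseteq> U"
        using \<delta>(2) by blast
      then show ?thesis
        using pathin_subtopology_uniform_piece[OF p i U(2)] small_path_def by blast
    qed
    then show ?thesis
      using n0 by (simp add: fine_subdivision_def)
  qed
  then show ?thesis
    unfolding eventually_sequentially by blast
qed

definition grid_square :: "nat \<Rightarrow> nat \<Rightarrow> nat \<Rightarrow> (real \<times> real) set" where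
  "grid_square N j i = {real j / real N .. real (Suc j) / real N} \<times> {real i / real N .. real (Suc i) / real N}"

definition grid_point :: "nat \<Rightarrow> nat \<Rightarrow> nat \<Rightarrow> real \<times> real" where
  "grid_point N j i = (real j / real N, real i / real N)"

lemma convex_grid_square: "convex (grid_square N j i)"
  by (simp add: grid_square_def convex_Times convex_real_interval)

lemma grid_square_subset:
  assumes "j < N" "i < N"
  shows "grid_square N j i \<subseteq> {0..1} \<times> {0..1}"
proof -
  have "real j / real N \<in> {0..1}" "real (Suc j) / real N \<in> {0..1}"
    "real i / real N \<in> {0..1}" "real (Suc i) / real N \<in> {0..1}"
    using assms by (simp_all only: frac_in_unit_interval less_imp_le Suc_leI)
  then show ?thesis
    unfolding grid_square_def by (intro Sigma_mono) (auto simp del: of_nat_Suc)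
qed

lemma grid_point_in_grid_square:
  "j' \<le> j \<Longrightarrow> j \<le> Suc j' \<Longrightarrow> i' \<le> i \<Longrightarrow> i \<le> Suc i' \<Longrightarrow> grid_point N j i \<in> grid_square N j' i'"
  by (auto simp: grid_square_def grid_point_def intro!: divide_right_mono simp del: of_nat_Suc)

lemma continuous_map_grid_square:
  assumes "continuous_map (top_of_set ({0..1} \<times> {0..1})) X h" "j < N" "i < N"
    and "h ` grid_square N j i \<subseteq> U"
  shows "continuous_map (top_of_set (grid_square N j i)) (subtopology X U) h"
  using continuous_map_from_subtopology_mono[OF assms(1) grid_square_subset[OF assms(2,3)]] assms(4)
  by (auto simp: continuous_map_in_subtopology)

lemma diameter_grid_square: "diameter (grid_square N j i) \<le> 2 / real N"
proof (rule diameter_le)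
  fix x y assume xy: "x \<in> grid_square N j i" "y \<in> grid_square N j i"
  then have "\<bar>fst x - fst y\<bar> \<le> 1 / real N" "\<bar>snd x - snd y\<bar> \<le> 1 / real N"
    using frac_Suc_diff[of j N] frac_Suc_diff[of i N] by (auto simp: grid_square_def)
  moreover have "x - y = (fst x - fst y, snd x - snd y)"
    by (simp add: prod_eq_iff)
  then have "norm (x - y) \<le> norm (fst x - fst y) + norm (snd x - snd y)"
    by (metis norm_Pair_le)
  ultimately show "norm (x - y) \<le> 2 / real N"
    by simp
qed simp

lemma fine_grid:
  assumes h: "continuous_map (top_of_set ({0..1} \<times> {0..1})) X h"
    and opn: "\<And>U. U \<in> \<U> \<Longrightarrow> openin X U" and cover: "\<Union>\<U> = topspace X" and ne: "\<U> \<noteq> {}"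
  obtains N where "0 < N" "\<And>j i. j < N \<Longrightarrow> i < N \<Longrightarrow> \<exists>U\<in>\<U>. h ` grid_square N j i \<subseteq> U"
proof -
  obtain \<delta> where \<delta>: "0 < \<delta>"
    "\<And>T. T \<subseteq> {0..1} \<times> {0..1} \<Longrightarrow> diameter T < \<delta> \<Longrightarrow> \<exists>U\<in>\<U>. h ` T \<subseteq> U"
    using Lebesgue_number_continuous_map[OF compact_Times[OF compact_Icc compact_Icc] h opn cover ne]
    by blast
  obtain N :: nat where N: "2 / \<delta> < real N"
    using reals_Archimedean2 by blast
  then have N0: "0 < N"
    using \<delta>(1) by (smt (verit) divide_pos_pos of_nat_0_less_iff)
  then have "2 / real N < \<delta>"
    using N \<delta>(1) by (simp add: field_simps)
  then have "\<exists>U\<in>\<U>. h ` grid_square N j i \<subseteq> U" if "j < N" "i < N" for j i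
    using \<delta>(2)[OF grid_square_subset[OF that]] diameter_grid_square[of N j i] by linarith
  with N0 show ?thesis
    using that by blast
qed

section \<open>Extending local cocycles that agree on common paths\<close>

locale compatible_local_cocycles = group G for G :: "('g, 'm) monoid_scheme" (structure) +
  fixes X :: "'a topology" and b :: 'a and \<U> :: "'a set set"
    and v :: "'a set \<Rightarrow> (real \<Rightarrow> 'a) \<Rightarrow> 'g"
  assumes opn: "\<And>U. U \<in> \<U> \<Longrightarrow> openin X U" and cover: "\<Union>\<U> = topspace X"
    and base: "\<And>U. U \<in> \<U> \<Longrightarrow> b \<in> U" and nonempty: "\<U> \<noteq> {}"
    and local_cocycle: "\<And>U. U \<in> \<U> \<Longrightarrow> v U \<in> cocycle1 (subtopology X U) b G"
    and agree: "\<And>U V p. U \<in> \<U> \<Longrightarrow> V \<in> \<U> \<Longrightarrow> pathin (subtopology X U) p \<Longrightarrow>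
                   pathin (subtopology X V) p \<Longrightarrow> v U p = v V p"
begin

definition local_value :: "(real \<Rightarrow> 'a) \<Rightarrow> 'g" where
  "local_value q = v (SOME U. U \<in> \<U> \<and> pathin (subtopology X U) q) q"

definition subdivision_prod :: "(real \<Rightarrow> 'a) \<Rightarrow> nat \<Rightarrow> 'g" where
  "subdivision_prod p n = ordered_prod G (\<lambda>i. local_value (uniform_piece p n i)) n"

definition glued :: "(real \<Rightarrow> 'a) \<Rightarrow> 'g" where
  "glued = restrict (\<lambda>p. subdivision_prod p (SOME n. fine_subdivision X \<U> p n)) (Collect (pathin X))"

lemma local_value_eq:
  assumes U: "U \<in> \<U>" and q: "pathin (subtopology X U) q"
  shows "local_value q = v U q"
proof -
  let ?V = "SOME U. U \<in> \<U> \<and> pathin (subtopology X U) q"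
  have "?V \<in> \<U> \<and> pathin (subtopology X ?V) q"
    by (rule someI_ex) (use U q in blast)
  then show ?thesis
    unfolding local_value_def using agree[OF _ U _ q] by blast
qed

lemma local_value_carrier:
  assumes "small_path X \<U> q"
  shows "local_value q \<in> carrier G"
proof -
  obtain U where "U \<in> \<U>" "pathin (subtopology X U) q"
    using assms unfolding small_path_def by blast
  then show ?thesis
    using local_value_eq cocycle1_carrier[OF local_cocycle] by simp
qed

lemma local_value_eq_on_unit_interval:
  assumes q: "small_path X \<U> q" and e: "\<And>x. x \<in> {0..1} \<Longrightarrow> q' x = q x"
  shows "small_path X \<U> q' \<and> local_value q' = local_value q"
proof -
  obtain U where U: "U \<in> \<U>" "pathin (subtopology X U) q"
    using q unfolding small_path_def by blast
  have "pathin (subtopology X U) q' \<and> v U q' = v U q"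
    by (rule cocycle1_eq_on_unit_interval[OF local_cocycle[OF U(1)] U(2) e])
  then show ?thesis
    using U local_value_eq[OF U(1)] unfolding small_path_def by auto
qed

lemma local_value_const:
  assumes q: "small_path X \<U> q" and "\<And>x. x \<in> {0..1} \<Longrightarrow> q x = a"
  shows "local_value q = \<one>"
proof -
  obtain U where U: "U \<in> \<U>" "pathin (subtopology X U) q"
    using q unfolding small_path_def by blast
  then show ?thesis
    using local_value_eq[OF U] cocycle1_const_on_unit_interval[OF local_cocycle[OF U(1)] U(2) assms(2)]
    by simp
qed

lemma base_in_topspace: "b \<in> topspace X"
  using nonempty base openin_subset[OF opn] by blast

lemma eventually_fine: "pathin X p \<Longrightarrow> \<forall>\<^sub>F n in sequentially. fine_subdivision X \<U> p n"
  by (rule eventually_fine_subdivision[OF _ opn cover nonempty])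

lemma fine_subdivision_exists: "pathin X p \<Longrightarrow> \<exists>n. fine_subdivision X \<U> p n"
  using eventually_fine by (auto simp: eventually_sequentially)

lemma subdivision_prod_carrier: "fine_subdivision X \<U> p n \<Longrightarrow> subdivision_prod p n \<in> carrier G"
  unfolding subdivision_prod_def fine_subdivision_def
  by (rule ordered_prod_closed) (simp add: local_value_carrier)

text \<open>All finer pieces inside a small piece are evaluated by one local cocycle.\<close>
lemma subdivision_prod_refine:
  assumes fine: "fine_subdivision X \<U> p n" and m: "0 < m"
  shows "fine_subdivision X \<U> p (n * m) \<and> subdivision_prod p (n * m) = subdivision_prod p n"
proof -
  have n: "0 < n" and small: "\<And>i. i < n \<Longrightarrow> small_path X \<U> (uniform_piece p n i)"
    using fine unfolding fine_subdivision_def by blast+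
  have pieces: "uniform_piece p (n * m) (i * m + j) = uniform_piece (uniform_piece p n i) m j" for i j
    by (rule uniform_piece_uniform_piece[OF n m, symmetric])
  have fine': "fine_subdivision X \<U> p (n * m)"
    unfolding fine_subdivision_def
  proof (intro conjI allI impI)
    fix k assume k: "k < n * m"
    have "k div m < n" "k mod m < m"
      using k m by (simp_all add: less_mult_imp_div_less)
    then have "small_path X \<U> (uniform_piece (uniform_piece p n (k div m)) m (k mod m))"
      using small small_path_uniform_piece by blast
    then show "small_path X \<U> (uniform_piece p (n * m) k)"
      using pieces[of "k div m" "k mod m"] by simp
  qed (use n m in simp)
  have "subdivision_prod p (n * m)
      = ordered_prod G (\<lambda>i. ordered_prod G (\<lambda>j. local_value (uniform_piece p (n * m) (i * m + j))) m) n"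
    unfolding subdivision_prod_def
    by (rule ordered_prod_mult) (use fine' in \<open>simp add: fine_subdivision_def local_value_carrier\<close>)
  also have "\<dots> = subdivision_prod p n"
    unfolding subdivision_prod_def
  proof (rule ordered_prod_cong)
    fix i assume i: "i < n"
    obtain U where U: "U \<in> \<U>" "pathin (subtopology X U) (uniform_piece p n i)"
      using small[OF i] unfolding small_path_def by blast
    have "ordered_prod G (\<lambda>j. local_value (uniform_piece p (n * m) (i * m + j))) m
        = ordered_prod G (\<lambda>j. v U (uniform_piece (uniform_piece p n i) m j)) m"
      by (intro ordered_prod_cong) (simp add: pieces local_value_eq[OF U(1) pathin_uniform_piece[OF U(2)]])
    also have "\<dots> = v U (uniform_piece p n i)"
      by (rule cocycle1_uniform_subdivision[OF local_cocycle[OF U(1)] U(2) m, symmetric])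
    finally show "ordered_prod G (\<lambda>j. local_value (uniform_piece p (n * m) (i * m + j))) m
        = local_value (uniform_piece p n i)"
      using local_value_eq[OF U] by simp
  qed
  finally show ?thesis
    using fine' by simp
qed

lemma subdivision_prod_independent:
  "fine_subdivision X \<U> p n \<Longrightarrow> fine_subdivision X \<U> p m \<Longrightarrow> subdivision_prod p n = subdivision_prod p m"
  using subdivision_prod_refine[of p n m] subdivision_prod_refine[of p m n]
  by (simp add: fine_subdivision_def mult.commute)

lemma glued_eq:
  assumes p: "pathin X p" and fine: "fine_subdivision X \<U> p n"
  shows "glued p = subdivision_prod p n"
proof -
  have "fine_subdivision X \<U> p (SOME n. fine_subdivision X \<U> p n)"
    using fine by (rule someI)
  then show ?thesis
    unfolding glued_def using p subdivision_prod_independent[OF _ fine] by simp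
qed

lemma glued_local:
  assumes U: "U \<in> \<U>" and p: "pathin (subtopology X U) p"
  shows "glued p = v U p"
proof -
  have "fine_subdivision X \<U> p 1"
    using U p by (auto simp: fine_subdivision_def small_path_def uniform_piece_def)
  then have "glued p = subdivision_prod p 1"
    using p by (intro glued_eq) (auto simp: pathin_subtopology)
  also have "\<dots> = v U p"
    using local_value_eq[OF U p] cocycle1_carrier[OF local_cocycle[OF U] p]
    by (simp add: subdivision_prod_def uniform_piece_def)
  finally show ?thesis .
qed

lemma restrict_glued:
  assumes U: "U \<in> \<U>"
  shows "restrict glued (Collect (pathin (subtopology X U))) = v U"
proof
  fix p
  show "restrict glued (Collect (pathin (subtopology X U))) p = v U p"
    using glued_local[OF U, of p] cocycle1_undefined[OF local_cocycle[OF U], of p] by auto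
qed

lemma glued_path_cat:
  assumes p: "pathin X p" and q: "pathin X q" and e: "p 1 = q 0"
  shows "glued (path_cat p q) = glued p \<otimes> glued q"
proof -
  obtain n where fp: "fine_subdivision X \<U> p n" and fq: "fine_subdivision X \<U> q n"
    using eventually_happens'[OF _ eventually_conj[OF eventually_fine[OF p] eventually_fine[OF q]]]
    by auto
  let ?C = "uniform_piece (path_cat p q) (n + n)"
  have left: "small_path X \<U> (?C i) \<and> local_value (?C i) = local_value (uniform_piece p n i)"
    if i: "i < n" for i
  proof (rule local_value_eq_on_unit_interval)
    show "small_path X \<U> (uniform_piece p n i)"
      using fp i by (simp add: fine_subdivision_def)
  qed (rule uniform_piece_path_cat_left[OF i])
  have right: "small_path X \<U> (?C (n + i)) \<and> local_value (?C (n + i)) = local_value (uniform_piece q n i)"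
    if i: "i < n" for i
  proof (rule local_value_eq_on_unit_interval)
    show "small_path X \<U> (uniform_piece q n i)"
      using fq i by (simp add: fine_subdivision_def)
  qed (rule uniform_piece_path_cat_right[where p = p and q = q, OF e i])
  have fine: "fine_subdivision X \<U> (path_cat p q) (n + n)"
    unfolding fine_subdivision_def
  proof (intro conjI allI impI)
    fix k assume "k < n + n"
    then consider "k < n" | i where "k = n + i" "i < n"
      by (metis add_less_cancel_left le_Suc_ex not_less)
    then show "small_path X \<U> (?C k)"
      by cases (simp_all add: left right)
  qed (use fp in \<open>simp add: fine_subdivision_def\<close>)
  have "glued (path_cat p q) = subdivision_prod (path_cat p q) (n + n)"
    by (rule glued_eq[OF pathin_path_cat[OF p q e] fine])
  also have "\<dots> = ordered_prod G (\<lambda>k. local_value (?C k)) n \<otimes> ordered_prod G (\<lambda>i. local_value (?C (n + i))) n"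
    unfolding subdivision_prod_def
    by (rule ordered_prod_add) (use fine in \<open>simp add: fine_subdivision_def local_value_carrier\<close>)
  also have "\<dots> = subdivision_prod p n \<otimes> subdivision_prod q n"
    unfolding subdivision_prod_def using left right by (simp cong: ordered_prod_cong)
  also have "\<dots> = glued p \<otimes> glued q"
    using glued_eq[OF p fp] glued_eq[OF q fq] by simp
  finally show ?thesis .
qed

context
  fixes h :: "real \<times> real \<Rightarrow> 'a" and N :: nat
  assumes h: "continuous_map (top_of_set ({0..1} \<times> {0..1})) X h" and N: "0 < N"
    and grid: "\<And>j i. j < N \<Longrightarrow> i < N \<Longrightarrow> \<exists>U\<in>\<U>. h ` grid_square N j i \<subseteq> U"
begin

lemma small_grid_edge:
  assumes "j < N" "i < N" "x \<in> grid_square N j i" "y \<in> grid_square N j i"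
  shows "small_path X \<U> (h \<circ> linepath x y)"
proof -
  obtain U where "U \<in> \<U>" "h ` grid_square N j i \<subseteq> U"
    using grid assms(1,2) by blast
  then show ?thesis
    using pathin_comp_linepath[OF convex_grid_square continuous_map_grid_square[OF h assms(1,2)] assms(3,4)]
    unfolding small_path_def by blast
qed

lemma small_grid_horizontal_edge:
  assumes "j \<le> N" "i < N"
  shows "small_path X \<U> (h \<circ> linepath (grid_point N j i) (grid_point N j (Suc i)))"
proof -
  have "min j (N - 1) < N" "min j (N - 1) \<le> j" "j \<le> Suc (min j (N - 1))"
    using assms(1) N by auto
  then show ?thesis
    using assms(2) by (intro small_grid_edge[of "min j (N - 1)" i] grid_point_in_grid_square) simp_all
qed

lemma small_grid_vertical_edge:
  assumes "j < N" "i \<le> N"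
  shows "small_path X \<U> (h \<circ> linepath (grid_point N j i) (grid_point N (Suc j) i))"
proof -
  have "min i (N - 1) < N" "min i (N - 1) \<le> i" "i \<le> Suc (min i (N - 1))"
    using assms(2) N by auto
  then show ?thesis
    using assms(1) by (intro small_grid_edge[of j "min i (N - 1)"] grid_point_in_grid_square) simp_all
qed

lemma grid_vertical_edge_apply:
  "(h \<circ> linepath (grid_point N j i) (grid_point N (Suc j) i)) x
     = h ((1 - x) * (real j / real N) + x * (real (Suc j) / real N), real i / real N)"
  by (simp add: grid_point_def linepath_Pair_same_snd del: of_nat_Suc)

lemma local_value_grid_vertical_edge:
  assumes j: "j < N" and i: "i \<le> N"
    and const: "\<And>s. s \<in> {0..1} \<Longrightarrow> h (s, real i / real N) = a"
  shows "local_value (h \<circ> linepath (grid_point N j i) (grid_point N (Suc j) i)) = \<one>"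
proof (rule local_value_const[OF small_grid_vertical_edge[OF j i]])
  fix x :: real assume x: "x \<in> {0..1}"
  have "{real j / real N .. real (Suc j) / real N} \<subseteq> {0..1}"
    using frac_in_unit_interval[OF less_imp_le[OF j]] frac_in_unit_interval[OF Suc_leI[OF j]] by auto
  then have "(1 - x) * (real j / real N) + x * (real (Suc j) / real N) \<in> {0..1}"
    using interpolate_in_interval[OF x frac_le_frac_Suc[of j N]] by blast
  then show "(h \<circ> linepath (grid_point N j i) (grid_point N (Suc j) i)) x = a"
    unfolding grid_vertical_edge_apply by (rule const)
qed

lemma local_value_grid_square:
  assumes j: "j < N" and i: "i < N"
  shows "local_value (h \<circ> linepath (grid_point N j i) (grid_point N j (Suc i)))
           \<otimes> local_value (h \<circ> linepath (grid_point N j (Suc i)) (grid_point N (Suc j) (Suc i)))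
         = local_value (h \<circ> linepath (grid_point N j i) (grid_point N (Suc j) i))
           \<otimes> local_value (h \<circ> linepath (grid_point N (Suc j) i) (grid_point N (Suc j) (Suc i)))"
proof -
  obtain U where U: "U \<in> \<U>" "h ` grid_square N j i \<subseteq> U"
    using grid j i by blast
  note f = continuous_map_grid_square[OF h j i U(2)]
  have corners: "grid_point N j i \<in> grid_square N j i" "grid_point N j (Suc i) \<in> grid_square N j i"
    "grid_point N (Suc j) i \<in> grid_square N j i" "grid_point N (Suc j) (Suc i) \<in> grid_square N j i"
    by (simp_all add: grid_point_in_grid_square)
  have local: "local_value (h \<circ> linepath x y) = v U (h \<circ> linepath x y)"
    if "x \<in> grid_square N j i" "y \<in> grid_square N j i" for x y
    using local_value_eq[OF U(1) pathin_comp_linepath[OF convex_grid_square f that]] .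
  show ?thesis
    using cocycle1_square[OF local_cocycle[OF U(1)] convex_grid_square f corners(1,2,3,4)]
    by (simp add: local corners)
qed

text \<open>Each small square commutes, and the vertical edges at both ends are trivial because the
  homotopy fixes the endpoints.\<close>
lemma grid_row_prod_Suc:
  assumes j: "j < N"
    and bottom: "\<And>s. s \<in> {0..1} \<Longrightarrow> h (s, 0) = x0" and top: "\<And>s. s \<in> {0..1} \<Longrightarrow> h (s, 1) = x1"
  shows "ordered_prod G (\<lambda>i. local_value (h \<circ> linepath (grid_point N j i) (grid_point N j (Suc i)))) N
       = ordered_prod G (\<lambda>i. local_value (h \<circ> linepath (grid_point N (Suc j) i) (grid_point N (Suc j) (Suc i)))) N"
proof -
  let ?B = "\<lambda>j i. local_value (h \<circ> linepath (grid_point N j i) (grid_point N j (Suc i)))"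
  let ?A = "\<lambda>i. local_value (h \<circ> linepath (grid_point N j i) (grid_point N (Suc j) i))"
  have B: "?B j' i \<in> carrier G" if "j' \<le> N" "i < N" for j' i
    by (rule local_value_carrier[OF small_grid_horizontal_edge[OF that]])
  have j_le: "j \<le> N" "Suc j \<le> N"
    using j by simp_all
  have A: "?A i \<in> carrier G" if "i \<le> N" for i
    using j that by (intro local_value_carrier small_grid_vertical_edge)
  have "?A 0 = \<one>"
    by (rule local_value_grid_vertical_edge[where i = 0 and a = x0, OF j]) (simp_all add: bottom)
  moreover have "?A N = \<one>"
    by (rule local_value_grid_vertical_edge[where i = N and a = x1, OF j]) (use N in \<open>simp_all add: top\<close>)
  moreover have "ordered_prod G (?B j) N \<otimes> ?A N = ?A 0 \<otimes> ordered_prod G (?B (Suc j)) N"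
    by (rule ordered_prod_telescope, fact B[OF j_le(1)], fact A, fact B[OF j_le(2)],
        fact local_value_grid_square[OF j])
  moreover have "ordered_prod G (?B j) N \<in> carrier G" "ordered_prod G (?B (Suc j)) N \<in> carrier G"
    by (rule ordered_prod_closed, fact B[OF j_le(1)], rule ordered_prod_closed, fact B[OF j_le(2)])
  ultimately show ?thesis
    by simp
qed

lemma glued_grid_row:
  assumes j: "j \<le> N"
  shows "glued (\<lambda>x. h (real j / real N, x))
       = ordered_prod G (\<lambda>i. local_value (h \<circ> linepath (grid_point N j i) (grid_point N j (Suc i)))) N"
proof -
  have pieces: "uniform_piece (\<lambda>x. h (real j / real N, x)) N i = h \<circ> linepath (grid_point N j i) (grid_point N j (Suc i))"
    for i
    by (rule ext) (simp add: uniform_piece_def subpath_map_apply grid_point_def linepath_Pair_same_fst)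
  have "(\<lambda>x. (real j / real N, x)) ` {0..1} \<subseteq> {0..1} \<times> {0..1}"
    using frac_in_unit_interval[OF j] by auto
  then have "pathin X (h \<circ> (\<lambda>x. (real j / real N, x)))"
    by (intro pathin_comp_path[OF h]) (auto simp: path_def path_image_def intro!: continuous_intros)
  moreover have "fine_subdivision X \<U> (\<lambda>x. h (real j / real N, x)) N"
    using N j by (simp add: fine_subdivision_def pieces small_grid_horizontal_edge)
  ultimately show ?thesis
    by (simp add: glued_eq o_def subdivision_prod_def pieces)
qed

end

lemma glued_homotopic:
  assumes p: "pathin X p" and q: "pathin X q" and pq: "path_homotopic X p q"
  shows "glued p = glued q"
proof -
  obtain h :: "real \<times> real \<Rightarrow> 'a"
    where h: "continuous_map (prod_topology (top_of_set {0..1}) (top_of_set {0..1})) X h"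
    and h0: "\<forall>x. h (0, x) = p x" and h1: "\<forall>x. h (1, x) = q x"
    and ends: "\<forall>s\<in>{0..1}. h (s, 0) = p 0 \<and> h (s, 1) = p 1"
    using pq unfolding path_homotopic_def homotopic_with_def by blast
  have hc: "continuous_map (top_of_set ({0..1} \<times> {0..1})) X h"
    using h by simp
  have bottom: "h (s, 0) = p 0" and top: "h (s, 1) = p 1" if "s \<in> {0..1}" for s
    using ends that by auto
  obtain N where N: "0 < N" and grid: "\<And>j i. j < N \<Longrightarrow> i < N \<Longrightarrow> \<exists>U\<in>\<U>. h ` grid_square N j i \<subseteq> U"
    using fine_grid[OF hc opn cover nonempty] by blast
  have "glued (\<lambda>x. h (real j / real N, x)) = glued (\<lambda>x. h (0, x))" if "j \<le> N" for j
    using that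
  proof (induction j)
    case (Suc j)
    then have j: "j < N"
      by simp
    have "glued (\<lambda>x. h (real (Suc j) / real N, x)) = glued (\<lambda>x. h (real j / real N, x))"
      using glued_grid_row[OF hc N grid less_imp_le[OF j]] glued_grid_row[OF hc N grid Suc_leI[OF j]]
        grid_row_prod_Suc[OF hc N grid j bottom top] by simp
    with Suc j show ?case
      by simp
  qed simp
  from this[of N] show ?thesis
    using N h0 h1 by simp
qed

lemma glued_cocycle1: "glued \<in> cocycle1 X b G"
  unfolding cocycle1_def
proof (intro CollectI conjI allI impI)
  have "glued p \<in> carrier G" if p: "pathin X p" for p
    using glued_eq[OF p] subdivision_prod_carrier fine_subdivision_exists[OF p] by auto
  then show "glued \<in> Collect (pathin X) \<rightarrow>\<^sub>E carrier G"
    unfolding glued_def restrict_PiE_iff by simp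
  obtain U where U: "U \<in> \<U>"
    using nonempty by blast
  then have "b \<in> topspace (subtopology X U)"
    using base_in_topspace base by simp
  then show "glued (\<lambda>t. b) = \<one>"
    using glued_local[OF U] cocycle1_const[OF local_cocycle[OF U]] by simp
next
  fix p q
  show "pathin X p \<and> pathin X q \<and> path_homotopic X p q \<Longrightarrow> glued p = glued q"
    using glued_homotopic by blast
  show "pathin X p \<and> pathin X q \<and> p 1 = q 0 \<Longrightarrow> glued (path_cat p q) = glued p \<otimes> glued q"
    using glued_path_cat by blast
qed

lemma extension_exists: "\<exists>u\<in>cocycle1 X b G. \<forall>U\<in>\<U>. restrict u (Collect (pathin (subtopology X U))) = v U"
  using glued_cocycle1 restrict_glued by blast

end

context group
begin

lemma cocycle1_relation_from_subdivision:
  assumes u: "u \<in> cocycle1 W b G" and u': "u' \<in> cocycle1 W b G" and c: "c \<in> cochain0 W b G"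
    and p: "pathin W p" and n: "0 < n"
    and pieces: "\<And>i. i < n \<Longrightarrow> u (uniform_piece p n i)
      = c (uniform_piece p n i 0) \<otimes> u' (uniform_piece p n i) \<otimes> inv (c (uniform_piece p n i 1))"
  shows "u p = c (p 0) \<otimes> u' p \<otimes> inv (c (p 1))"
proof -
  let ?a = "\<lambda>i. c (p (real i / real n))"
  have a: "?a i \<in> carrier G" if "i \<le> n" for i
    using cochain0_carrier[OF c] path_image_subset_topspace[OF p] frac_in_unit_interval[OF that]
    by (auto simp: Pi_iff)
  have closed: "u (uniform_piece p n i) \<in> carrier G" "u' (uniform_piece p n i) \<in> carrier G" if "i < n" for i
    using cocycle1_carrier[OF u] cocycle1_carrier[OF u'] pathin_uniform_piece[OF p that] by auto
  have "ordered_prod G (\<lambda>i. u (uniform_piece p n i)) n \<otimes> ?a n = ?a 0 \<otimes> ordered_prod G (\<lambda>i. u' (uniform_piece p n i)) n"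
  proof (rule ordered_prod_telescope)
    fix i assume i: "i < n"
    then show "u (uniform_piece p n i) \<otimes> ?a (Suc i) = ?a i \<otimes> u' (uniform_piece p n i)"
      using pieces[OF i] a[of i] a[of "Suc i"] closed[OF i]
      by (simp add: uniform_piece_def subpath_map_apply m_assoc)
  qed (use a closed in auto)
  moreover have "u p = ordered_prod G (\<lambda>i. u (uniform_piece p n i)) n"
    "u' p = ordered_prod G (\<lambda>i. u' (uniform_piece p n i)) n"
    using cocycle1_uniform_subdivision[OF u p n] cocycle1_uniform_subdivision[OF u' p n] by auto
  moreover have closed': "c (p 0) \<in> carrier G" "c (p 1) \<in> carrier G" "u p \<in> carrier G" "u' p \<in> carrier G"
    using cochain0_carrier[OF c] path_start_in_topspace[OF p] path_finish_in_topspace[OF p]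
      cocycle1_carrier[OF u p] cocycle1_carrier[OF u' p] by auto
  ultimately have "u p \<otimes> c (p 1) = c (p 0) \<otimes> u' p"
    using n by simp
  with closed' show ?thesis
    by (metis inv_solve_right m_closed)
qed

end

section \<open>Covers with path-connected double and triple intersections\<close>

locale path_connected_cover = group G for G :: "('g, 'm) monoid_scheme" (structure) +
  fixes X :: "'a topology" and b :: 'a and \<U> :: "'a set set"
  assumes base_in_topspace: "b \<in> topspace X"
    and opn: "\<And>U. U \<in> \<U> \<Longrightarrow> openin X U"
    and cover: "\<Union>\<U> = topspace X"
    and base: "\<And>U. U \<in> \<U> \<Longrightarrow> b \<in> U"
    and path_connected2: "\<And>U V. U \<in> \<U> \<Longrightarrow> V \<in> \<U> \<Longrightarrow> path_connectedin X (U \<inter> V)"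
    and path_connected3: "\<And>U V W. U \<in> \<U> \<Longrightarrow> V \<in> \<U> \<Longrightarrow> W \<in> \<U> \<Longrightarrow> path_connectedin X (U \<inter> V \<inter> W)"
begin

lemma nonempty: "\<U> \<noteq> {}"
  using base_in_topspace cover by auto

lemma topspace_subtopology_member: "U \<in> \<U> \<Longrightarrow> topspace (subtopology X U) = U"
  using openin_subset[OF opn] by (auto simp: Int_absorb1)

lemma base_in_subtopology: "U \<in> \<U> \<Longrightarrow> b \<in> topspace (subtopology X U)"
  using base_in_topspace base by simp

lemma base_in_subtopology_Int: "U \<in> \<U> \<Longrightarrow> V \<in> \<U> \<Longrightarrow> b \<in> topspace (subtopology X (U \<inter> V))"
  using base_in_topspace base by simp

definition home :: "'a \<Rightarrow> 'a set" where
  "home x = (SOME U. U \<in> \<U> \<and> x \<in> U)"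

lemma home: "x \<in> topspace X \<Longrightarrow> home x \<in> \<U> \<and> x \<in> home x"
  unfolding home_def by (rule someI_ex) (use cover in auto)

lemma home_member: "U \<in> \<U> \<Longrightarrow> x \<in> U \<Longrightarrow> home x \<in> \<U> \<and> x \<in> home x"
  using home openin_subset[OF opn] by blast

lemma path_from_base:
  assumes "U \<in> \<U>" "V \<in> \<U>" "x \<in> U \<inter> V"
  obtains g where "pathin (subtopology X (U \<inter> V)) g" "g 0 = b" "g 1 = x"
proof -
  have "b \<in> U \<inter> V"
    using assms(1,2) base by blast
  then show ?thesis
    using path_connectedin_obtain_path[OF path_connected2[OF assms(1,2)] _ assms(3)] that by blast
qed

lemma cochain0_glue:
  assumes cc: "\<And>U. U \<in> \<U> \<Longrightarrow> c U \<in> cochain0 (subtopology X U) b G"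
    and agree: "\<And>U V x. U \<in> \<U> \<Longrightarrow> V \<in> \<U> \<Longrightarrow> x \<in> U \<inter> V \<Longrightarrow> c U x = c V x"
  shows "\<exists>c'\<in>cochain0 X b G. \<forall>U\<in>\<U>. \<forall>x\<in>U. c' x = c U x"
proof -
  define c' where "c' = (\<lambda>x\<in>topspace X. c (home x) x)"
  have val: "c' x = c U x" if "U \<in> \<U>" "x \<in> U" for U x
    using agree[of "home x" U x] home_member[OF that] that openin_subset[OF opn] by (auto simp: c'_def)
  have "c' x \<in> carrier G" if "x \<in> topspace X" for x
    using cochain0_carrier[OF cc] home[OF that] topspace_subtopology_member by (simp add: that c'_def)
  moreover obtain U where "U \<in> \<U>"
    using nonempty by blast
  ultimately have "c' \<in> cochain0 X b G"
    unfolding cochain0_def using val[of U b] base cochain0_base[OF cc] by (auto simp: c'_def)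
  with val show ?thesis
    by blast
qed

lemma cochain_act_eq_if_small:
  assumes u: "u \<in> cocycle1 X b G" and u': "u' \<in> cocycle1 X b G" and c: "c \<in> cochain0 X b G"
    and small: "\<And>U p. U \<in> \<U> \<Longrightarrow> pathin (subtopology X U) p \<Longrightarrow> u p = c (p 0) \<otimes> u' p \<otimes> inv (c (p 1))"
  shows "u = cochain_act X G c u'"
proof
  fix p
  show "u p = cochain_act X G c u' p"
  proof (cases "pathin X p")
    case p: True
    obtain n where "fine_subdivision X \<U> p n"
      using eventually_fine_subdivision[OF p opn cover nonempty] by (auto simp: eventually_sequentially)
    then have "u p = c (p 0) \<otimes> u' p \<otimes> inv (c (p 1))"
      using small by (intro cocycle1_relation_from_subdivision[OF u u' c p])
        (auto simp: fine_subdivision_def small_path_def)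
    then show ?thesis
      using p by (simp add: cochain_act_apply)
  qed (simp add: cocycle1_undefined[OF u] cochain_act_undefined)
qed

lemma exists_local_cochains0_relating:
  assumes u: "u \<in> cocycle1 X b G" and u': "u' \<in> cocycle1 X b G"
    and local: "\<And>U. U \<in> \<U> \<Longrightarrow>
      orbit1 (subtopology X U) b G (restrict u (Collect (pathin (subtopology X U))))
        = orbit1 (subtopology X U) b G (restrict u' (Collect (pathin (subtopology X U))))"
  shows "\<exists>cc. \<forall>U\<in>\<U>. cc U \<in> cochain0 (subtopology X U) b G
      \<and> (\<forall>p. pathin (subtopology X U) p \<longrightarrow> u p = cc U (p 0) \<otimes> u' p \<otimes> inv (cc U (p 1)))
      \<and> (\<forall>g. pathin (subtopology X U) g \<and> g 0 = b \<longrightarrow> cc U (g 1) = inv (u g) \<otimes> u' g)"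
proof -
  have "\<exists>c. c \<in> cochain0 (subtopology X U) b G
      \<and> (\<forall>p. pathin (subtopology X U) p \<longrightarrow> u p = c (p 0) \<otimes> u' p \<otimes> inv (c (p 1)))
      \<and> (\<forall>g. pathin (subtopology X U) g \<and> g 0 = b \<longrightarrow> c (g 1) = inv (u g) \<otimes> u' g)"
    if U: "U \<in> \<U>" for U
    using cocycle1_restrict[OF u base[OF U] base_in_topspace] cocycle1_restrict[OF u' base[OF U] base_in_topspace]
    by (rule orbit1_eq_obtain_cochain0[OF base_in_subtopology[OF U] _ _ local[OF U]]) auto
  then show ?thesis
    by (rule bchoice[OF ballI])
qed

lemma orbit1_eq_if_locally_eq:
  assumes u: "u \<in> cocycle1 X b G" and u': "u' \<in> cocycle1 X b G"
    and local: "\<And>U. U \<in> \<U> \<Longrightarrow>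
      orbit1 (subtopology X U) b G (restrict u (Collect (pathin (subtopology X U))))
        = orbit1 (subtopology X U) b G (restrict u' (Collect (pathin (subtopology X U))))"
  shows "orbit1 X b G u = orbit1 X b G u'"
proof -
  obtain cc where "\<forall>U\<in>\<U>. cc U \<in> cochain0 (subtopology X U) b G
      \<and> (\<forall>p. pathin (subtopology X U) p \<longrightarrow> u p = cc U (p 0) \<otimes> u' p \<otimes> inv (cc U (p 1)))
      \<and> (\<forall>g. pathin (subtopology X U) g \<and> g 0 = b \<longrightarrow> cc U (g 1) = inv (u g) \<otimes> u' g)"
    using exists_local_cochains0_relating[OF u u' local] by blast
  then have cc: "\<And>U. U \<in> \<U> \<Longrightarrow> cc U \<in> cochain0 (subtopology X U) b G"
    and rel: "\<And>U p. U \<in> \<U> \<Longrightarrow> pathin (subtopology X U) p \<Longrightarrow> u p = cc U (p 0) \<otimes> u' p \<otimes> inv (cc U (p 1))"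
    and val: "\<And>U g. U \<in> \<U> \<Longrightarrow> pathin (subtopology X U) g \<Longrightarrow> g 0 = b \<Longrightarrow> cc U (g 1) = inv (u g) \<otimes> u' g"
    by blast+
  have agree: "cc U x = cc V x" if UV: "U \<in> \<U>" "V \<in> \<U>" "x \<in> U \<inter> V" for U V x
  proof -
    obtain g where g: "pathin (subtopology X (U \<inter> V)) g" "g 0 = b" "g 1 = x"
      by (rule path_from_base[OF UV])
    then show ?thesis
      using val[OF UV(1) pathin_subtopology_mono[OF g(1)]] val[OF UV(2) pathin_subtopology_mono[OF g(1)]]
      by auto
  qed
  obtain c where c: "c \<in> cochain0 X b G" and c_val: "\<And>U x. U \<in> \<U> \<Longrightarrow> x \<in> U \<Longrightarrow> c x = cc U x"
    using cochain0_glue[OF cc agree] by blast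
  have "u = cochain_act X G c u'"
  proof (rule cochain_act_eq_if_small[OF u u' c])
    fix U p assume "U \<in> \<U>" "pathin (subtopology X U) p"
    then show "u p = c (p 0) \<otimes> u' p \<otimes> inv (c (p 1))"
      using rel c_val by (auto simp: pathin_subtopology)
  qed
  then have "u \<in> orbit1 X b G u'"
    using c unfolding orbit1_def by blast
  then show ?thesis
    by (rule orbit1_eq[OF base_in_topspace u'])
qed

lemma H1_eq_if_res1_eq:
  assumes h: "h \<in> H1 X b G" and h': "h' \<in> H1 X b G"
    and res: "\<And>U. U \<in> \<U> \<Longrightarrow> res1 X b G U h = res1 X b G U h'"
  shows "h = h'"
proof -
  obtain u u' where u: "u \<in> h" and u': "u' \<in> h'"
    using H1_some_in[OF base_in_topspace] h h' by blast
  have "orbit1 X b G u = orbit1 X b G u'"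
    using H1_memberD[OF base_in_topspace h u] H1_memberD[OF base_in_topspace h' u'] res
      res1_eq_orbit1[OF base_in_topspace base h u] res1_eq_orbit1[OF base_in_topspace base h' u']
    by (intro orbit1_eq_if_locally_eq) auto
  then show ?thesis
    using H1_memberD[OF base_in_topspace h u] H1_memberD[OF base_in_topspace h' u'] by simp
qed

lemma res1_compatible:
  assumes h: "h \<in> H1 X b G" and U: "U \<in> \<U>" and V: "V \<in> \<U>"
  shows "res1 (subtopology X U) b G (U \<inter> V) (res1 X b G U h) = res1 (subtopology X V) b G (U \<inter> V) (res1 X b G V h)"
  using res1_res1[OF base_in_topspace _ _ h, of "U \<inter> V"] base U V by auto

end

locale compatible_cocycle_family = path_connected_cover G X b \<U>
  for G :: "('g, 'm) monoid_scheme" (structure) and X :: "'a topology" and b :: 'a and \<U> :: "'a set set" +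
  fixes u :: "'a set \<Rightarrow> (real \<Rightarrow> 'a) \<Rightarrow> 'g"
  assumes cocycle: "\<And>U. U \<in> \<U> \<Longrightarrow> u U \<in> cocycle1 (subtopology X U) b G"
    and compatible: "\<And>U V. U \<in> \<U> \<Longrightarrow> V \<in> \<U> \<Longrightarrow>
      orbit1 (subtopology X (U \<inter> V)) b G (restrict (u U) (Collect (pathin (subtopology X (U \<inter> V)))))
        = orbit1 (subtopology X (U \<inter> V)) b G (restrict (u V) (Collect (pathin (subtopology X (U \<inter> V)))))"
begin

text \<open>The transition function \<open>\<theta>\<^sub>U\<^sub>V\<close> on \<open>U \<inter> V\<close>; by \<open>transition_eq\<close> it does not depend
  on the chosen path.\<close>
definition transition :: "'a set \<Rightarrow> 'a set \<Rightarrow> 'a \<Rightarrow> 'g" where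
  "transition U V x = (let g = SOME g. pathin (subtopology X (U \<inter> V)) g \<and> g 0 = b \<and> g 1 = x
     in inv (u U g) \<otimes> u V g)"

lemma relating_cochain0:
  assumes U: "U \<in> \<U>" and V: "V \<in> \<U>"
  obtains c where "\<And>p. pathin (subtopology X (U \<inter> V)) p \<Longrightarrow> u U p = c (p 0) \<otimes> u V p \<otimes> inv (c (p 1))"
    "\<And>g. pathin (subtopology X (U \<inter> V)) g \<Longrightarrow> g 0 = b \<Longrightarrow> c (g 1) = inv (u U g) \<otimes> u V g"
proof -
  let ?P = "Collect (pathin (subtopology X (U \<inter> V)))"
  have restricted: "restrict (u W) ?P \<in> cocycle1 (subtopology X (U \<inter> V)) b G" if "W \<in> {U, V}" for W
  proof -
    have W: "W \<in> \<U>"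
      using that U V by blast
    have "subtopology (subtopology X W) (U \<inter> V) = subtopology X (U \<inter> V)"
      using that by (auto simp: subtopology_subtopology Int_absorb1)
    moreover have "restrict (u W) (Collect (pathin (subtopology (subtopology X W) (U \<inter> V))))
        \<in> cocycle1 (subtopology (subtopology X W) (U \<inter> V)) b G"
      by (rule cocycle1_restrict[OF cocycle[OF W] _ base_in_subtopology[OF W]]) (use base U V in auto)
    ultimately show ?thesis
      by simp
  qed
  obtain c where "c \<in> cochain0 (subtopology X (U \<inter> V)) b G"
    and rel: "\<And>p. pathin (subtopology X (U \<inter> V)) p \<Longrightarrow>
      restrict (u U) ?P p = c (p 0) \<otimes> restrict (u V) ?P p \<otimes> inv (c (p 1))"
    and val: "\<And>g. pathin (subtopology X (U \<inter> V)) g \<Longrightarrow> g 0 = b \<Longrightarrow>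
      c (g 1) = inv (restrict (u U) ?P g) \<otimes> restrict (u V) ?P g"
    by (rule orbit1_eq_obtain_cochain0[OF base_in_subtopology_Int[OF U V] restricted[of U] restricted[of V]
          compatible[OF U V]]) simp_all
  show ?thesis
  proof (rule that)
    fix p assume "pathin (subtopology X (U \<inter> V)) p"
    then show "u U p = c (p 0) \<otimes> u V p \<otimes> inv (c (p 1))"
      using rel by simp
  next
    fix g assume "pathin (subtopology X (U \<inter> V)) g" "g 0 = b"
    then show "c (g 1) = inv (u U g) \<otimes> u V g"
      using val by simp
  qed
qed

lemma transition_eq:
  assumes U: "U \<in> \<U>" and V: "V \<in> \<U>" and g: "pathin (subtopology X (U \<inter> V)) g" "g 0 = b"
  shows "transition U V (g 1) = inv (u U g) \<otimes> u V g"
proof -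
  obtain c where "\<And>p. pathin (subtopology X (U \<inter> V)) p \<Longrightarrow> u U p = c (p 0) \<otimes> u V p \<otimes> inv (c (p 1))"
    and c: "\<And>g. pathin (subtopology X (U \<inter> V)) g \<Longrightarrow> g 0 = b \<Longrightarrow> c (g 1) = inv (u U g) \<otimes> u V g"
    by (rule relating_cochain0[OF U V]) blast
  let ?g = "SOME g'. pathin (subtopology X (U \<inter> V)) g' \<and> g' 0 = b \<and> g' 1 = g 1"
  have "pathin (subtopology X (U \<inter> V)) ?g \<and> ?g 0 = b \<and> ?g 1 = g 1"
    by (rule someI[where x = g]) (use g in simp)
  then have "c (g 1) = inv (u U ?g) \<otimes> u V ?g"
    using c[of ?g] by simp
  then show ?thesis
    using c[OF g] by (simp add: transition_def Let_def)
qed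

lemma transition_relates:
  assumes U: "U \<in> \<U>" and V: "V \<in> \<U>" and p: "pathin (subtopology X (U \<inter> V)) p"
  shows "u U p = transition U V (p 0) \<otimes> u V p \<otimes> inv (transition U V (p 1))"
proof -
  obtain c where rel: "\<And>p. pathin (subtopology X (U \<inter> V)) p \<Longrightarrow> u U p = c (p 0) \<otimes> u V p \<otimes> inv (c (p 1))"
    and val: "\<And>g. pathin (subtopology X (U \<inter> V)) g \<Longrightarrow> g 0 = b \<Longrightarrow> c (g 1) = inv (u U g) \<otimes> u V g"
    by (rule relating_cochain0[OF U V]) blast
  have "transition U V x = c x" if x: "x \<in> U \<inter> V" for x
  proof -
    obtain g where g: "pathin (subtopology X (U \<inter> V)) g" "g 0 = b" "g 1 = x"
      by (rule path_from_base[OF U V x])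
    then show ?thesis
      using transition_eq[OF U V g(1,2)] val[OF g(1,2)] by simp
  qed
  moreover have "p 0 \<in> U \<inter> V" "p 1 \<in> U \<inter> V"
    using p by (auto simp: pathin_subtopology)
  ultimately show ?thesis
    using rel[OF p] by simp
qed

lemma transition_carrier:
  assumes U: "U \<in> \<U>" and V: "V \<in> \<U>" and x: "x \<in> U \<inter> V"
  shows "transition U V x \<in> carrier G"
proof -
  obtain g where g: "pathin (subtopology X (U \<inter> V)) g" "g 0 = b" "g 1 = x"
    by (rule path_from_base[OF U V x])
  then have "pathin (subtopology X U) g" "pathin (subtopology X V) g"
    by (auto intro: pathin_subtopology_mono)
  then show ?thesis
    using transition_eq[OF U V g(1,2)] g(3) cocycle1_carrier[OF cocycle[OF U]] cocycle1_carrier[OF cocycle[OF V]]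
    by simp
qed

lemma transition_base:
  assumes U: "U \<in> \<U>" and V: "V \<in> \<U>"
  shows "transition U V b = \<one>"
proof -
  have "pathin (subtopology X (U \<inter> V)) (\<lambda>t. b)"
    using base_in_topspace base U V by simp
  then show ?thesis
    using transition_eq[OF U V, of "\<lambda>t. b"] cocycle1_const[OF cocycle base_in_subtopology] U V by simp
qed

text \<open>This is where path-connectedness of triple intersections is used.\<close>
lemma transition_trans:
  assumes U: "U \<in> \<U>" and V: "V \<in> \<U>" and W: "W \<in> \<U>" and x: "x \<in> U \<inter> V \<inter> W"
  shows "transition U V x \<otimes> transition V W x = transition U W x"
proof -
  obtain g where g: "pathin (subtopology X (U \<inter> V \<inter> W)) g" "g 0 = b" "g 1 = x"
    using path_connectedin_obtain_path[OF path_connected3[OF U V W] _ x] base U V W by blast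
  have paths: "pathin (subtopology X (U \<inter> V)) g" "pathin (subtopology X (V \<inter> W)) g"
    "pathin (subtopology X (U \<inter> W)) g"
    by (rule pathin_subtopology_mono[OF g(1)]; blast)+
  have "u U g \<in> carrier G" "u V g \<in> carrier G" "u W g \<in> carrier G"
    using cocycle1_carrier[OF cocycle[OF U]] cocycle1_carrier[OF cocycle[OF V]] cocycle1_carrier[OF cocycle[OF W]]
      paths by (auto simp: pathin_subtopology)
  then show ?thesis
    using transition_eq[OF U V paths(1) g(2)] transition_eq[OF V W paths(2) g(2)]
      transition_eq[OF U W paths(3) g(2)] g(3)
    by (simp add: m_assoc mult_inv_cancel_left)
qed

definition twist :: "'a set \<Rightarrow> 'a \<Rightarrow> 'g" where
  "twist U = (\<lambda>x\<in>U. transition (home x) U x)"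

definition twisted :: "'a set \<Rightarrow> (real \<Rightarrow> 'a) \<Rightarrow> 'g" where
  "twisted U = cochain_act (subtopology X U) G (twist U) (u U)"

lemma twist_cochain0:
  assumes U: "U \<in> \<U>"
  shows "twist U \<in> cochain0 (subtopology X U) b G"
proof -
  have "twist U \<in> U \<rightarrow>\<^sub>E carrier G"
    unfolding twist_def restrict_PiE_iff using transition_carrier home_member[OF U] U by blast
  moreover have "twist U b = \<one>"
    using transition_base home_member[OF U base[OF U]] base[OF U] U by (simp add: twist_def)
  ultimately show ?thesis
    unfolding cochain0_def using topspace_subtopology_member[OF U] by simp
qed

lemma twisted_cocycle1: "U \<in> \<U> \<Longrightarrow> twisted U \<in> cocycle1 (subtopology X U) b G"
  unfolding twisted_def by (rule cochain_act_cocycle1[OF cocycle twist_cochain0 base_in_subtopology])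

lemma orbit1_twisted:
  assumes U: "U \<in> \<U>"
  shows "orbit1 (subtopology X U) b G (twisted U) = orbit1 (subtopology X U) b G (u U)"
proof -
  have "twisted U \<in> orbit1 (subtopology X U) b G (u U)"
    unfolding twisted_def orbit1_def using twist_cochain0[OF U] by blast
  then show ?thesis
    by (rule orbit1_eq[OF base_in_subtopology[OF U] cocycle[OF U]])
qed

text \<open>At each endpoint \<open>x\<close> of the path both sides reduce to \<open>\<theta>\<^bsub>home x, W\<^esub>(x)\<close> by the
  cocycle identity.\<close>
lemma twisted_agree:
  assumes U: "U \<in> \<U>" and W: "W \<in> \<U>"
    and pU: "pathin (subtopology X U) p" and pW: "pathin (subtopology X W) p"
  shows "twisted U p = twisted W p"
proof -
  have p: "pathin (subtopology X (U \<inter> W)) p"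
    using pU pW by (auto simp: pathin_subtopology)
  have ends: "p 0 \<in> U \<inter> W" "p 1 \<in> U \<inter> W"
    using p by (auto simp: pathin_subtopology)
  have trans: "transition (home x) U x \<otimes> transition U W x = transition (home x) W x"
    and closed: "transition (home x) U x \<in> carrier G" "transition U W x \<in> carrier G"
    if x: "x \<in> U \<inter> W" for x
  proof -
    have A: "home x \<in> \<U>" "x \<in> home x"
      using home_member[OF U] x by auto
    show "transition (home x) U x \<otimes> transition U W x = transition (home x) W x"
      using transition_trans[OF A(1) U W] A(2) x by simp
    show "transition (home x) U x \<in> carrier G" "transition U W x \<in> carrier G"
      using transition_carrier[OF A(1) U] transition_carrier[OF U W x] A(2) x by auto
  qed
  have regroup: "a \<otimes> (c \<otimes> q \<otimes> inv d) \<otimes> inv e = (a \<otimes> c) \<otimes> q \<otimes> inv (e \<otimes> d)"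
    if "a \<in> carrier G" "c \<in> carrier G" "q \<in> carrier G" "d \<in> carrier G" "e \<in> carrier G" for a c q d e
    using that by (simp add: m_assoc inv_mult_group)
  have "twisted U p = twist U (p 0) \<otimes> u U p \<otimes> inv (twist U (p 1))"
    using pU by (simp add: twisted_def cochain_act_apply)
  also have "\<dots> = transition (home (p 0)) U (p 0) \<otimes> (transition U W (p 0) \<otimes> u W p \<otimes> inv (transition U W (p 1)))
      \<otimes> inv (transition (home (p 1)) U (p 1))"
    using ends transition_relates[OF U W p] by (simp add: twist_def)
  also have "\<dots> = (transition (home (p 0)) U (p 0) \<otimes> transition U W (p 0)) \<otimes> u W p
      \<otimes> inv (transition (home (p 1)) U (p 1) \<otimes> transition U W (p 1))"
    using closed[OF ends(1)] closed[OF ends(2)] cocycle1_carrier[OF cocycle[OF W] pW] by (intro regroup)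
  also have "\<dots> = twisted W p"
    using pW ends by (simp add: trans twisted_def twist_def cochain_act_apply)
  finally show ?thesis .
qed

lemma exists_H1_restricting_to_family:
  "\<exists>h\<in>H1 X b G. \<forall>U\<in>\<U>. res1 X b G U h = orbit1 (subtopology X U) b G (u U)"
proof -
  interpret glue: compatible_local_cocycles G X b \<U> twisted
    by (intro compatible_local_cocycles.intro compatible_local_cocycles_axioms.intro is_group opn cover base
        nonempty twisted_cocycle1 twisted_agree)
  obtain w where w: "w \<in> cocycle1 X b G"
    and restrict_w: "\<And>U. U \<in> \<U> \<Longrightarrow> restrict w (Collect (pathin (subtopology X U))) = twisted U"
    using glue.extension_exists by blast
  have "res1 X b G U (orbit1 X b G w) = orbit1 (subtopology X U) b G (u U)" if U: "U \<in> \<U>" for U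
    using res1_eq_orbit1[OF base_in_topspace base[OF U] orbit1_in_H1[OF w] orbit1_self[OF base_in_topspace w]]
      restrict_w[OF U] orbit1_twisted[OF U] by simp
  then show ?thesis
    using orbit1_in_H1[OF w] by blast
qed

end

context path_connected_cover
begin

lemma H1_gluing:
  assumes hU: "\<And>U. U \<in> \<U> \<Longrightarrow> hU U \<in> H1 (subtopology X U) b G"
    and compat: "\<And>U V. U \<in> \<U> \<Longrightarrow> V \<in> \<U> \<Longrightarrow>
      res1 (subtopology X U) b G (U \<inter> V) (hU U) = res1 (subtopology X V) b G (U \<inter> V) (hU V)"
  shows "\<exists>h\<in>H1 X b G. \<forall>U\<in>\<U>. res1 X b G U h = hU U"
proof -
  define u where "u U = (SOME w. w \<in> hU U)" for U
  have u: "u U \<in> hU U" if "U \<in> \<U>" for U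
    unfolding u_def by (rule H1_some_in[OF base_in_subtopology[OF that] hU[OF that]])
  have cocycle: "u U \<in> cocycle1 (subtopology X U) b G" and orbit: "orbit1 (subtopology X U) b G (u U) = hU U"
    if "U \<in> \<U>" for U
    using H1_memberD[OF base_in_subtopology[OF that] hU[OF that] u[OF that]] by auto
  have res: "res1 (subtopology X W) b G A (hU W)
      = orbit1 (subtopology X A) b G (restrict (u W) (Collect (pathin (subtopology X A))))"
    if "W \<in> \<U>" "b \<in> A" "A \<subseteq> W" for W A
    using res1_eq_orbit1[OF base_in_subtopology[OF that(1)] that(2) hU[OF that(1)] u[OF that(1)]] that(3)
    by (simp add: subtopology_subtopology Int_absorb1)
  interpret family: compatible_cocycle_family G X b \<U> u
  proof (intro compatible_cocycle_family.intro path_connected_cover_axioms compatible_cocycle_family_axioms.intro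
      cocycle)
    fix U V assume U: "U \<in> \<U>" and V: "V \<in> \<U>"
    then have "b \<in> U \<inter> V"
      using base by blast
    then show "orbit1 (subtopology X (U \<inter> V)) b G (restrict (u U) (Collect (pathin (subtopology X (U \<inter> V)))))
        = orbit1 (subtopology X (U \<inter> V)) b G (restrict (u V) (Collect (pathin (subtopology X (U \<inter> V)))))"
      using compat[OF U V] res[OF U _ Int_lower1] res[OF V _ Int_lower2] by simp
  qed
  obtain h where "h \<in> H1 X b G" "\<forall>U\<in>\<U>. res1 X b G U h = orbit1 (subtopology X U) b G (u U)"
    using family.exists_H1_restricting_to_family by blast
  then show ?thesis
    using orbit by auto
qed

lemma exists_H1_with_restrictions_iff:
  assumes hU: "\<And>U. U \<in> \<U> \<Longrightarrow> hU U \<in> H1 (subtopology X U) b G"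
  shows "(\<exists>h\<in>H1 X b G. \<forall>U\<in>\<U>. res1 X b G U h = hU U) \<longleftrightarrow>
      (\<forall>U\<in>\<U>. \<forall>V\<in>\<U>. res1 (subtopology X U) b G (U \<inter> V) (hU U) = res1 (subtopology X V) b G (U \<inter> V) (hU V))"
proof
  assume "\<exists>h\<in>H1 X b G. \<forall>U\<in>\<U>. res1 X b G U h = hU U"
  then obtain h where h: "h \<in> H1 X b G" "\<forall>U\<in>\<U>. res1 X b G U h = hU U"
    by blast
  show "\<forall>U\<in>\<U>. \<forall>V\<in>\<U>. res1 (subtopology X U) b G (U \<inter> V) (hU U) = res1 (subtopology X V) b G (U \<inter> V) (hU V)"
  proof (intro ballI)
    fix U V assume "U \<in> \<U>" "V \<in> \<U>"
    then show "res1 (subtopology X U) b G (U \<inter> V) (hU U) = res1 (subtopology X V) b G (U \<inter> V) (hU V)"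
      using res1_compatible[OF h(1)] h(2) by simp
  qed
next
  assume "\<forall>U\<in>\<U>. \<forall>V\<in>\<U>. res1 (subtopology X U) b G (U \<inter> V) (hU U) = res1 (subtopology X V) b G (U \<inter> V) (hU V)"
  then show "\<exists>h\<in>H1 X b G. \<forall>U\<in>\<U>. res1 X b G U h = hU U"
    by (intro H1_gluing[OF hU]) auto
qed

end

theorem theorem5p1:
  fixes X :: "'a topology" and b :: 'a and \<U> :: "'a set set"
    and G :: "('g, 'm) monoid_scheme" and hU :: "'a set \<Rightarrow> ((real \<Rightarrow> 'a) \<Rightarrow> 'g) set"
  assumes "b \<in> topspace X"
    and "\<And>U. U \<in> \<U> \<Longrightarrow> openin X U"
    and "\<Union>\<U> = topspace X"
    and "\<And>U. U \<in> \<U> \<Longrightarrow> b \<in> U"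
    and "\<And>U. U \<in> \<U> \<Longrightarrow> path_connectedin X U"
    and "\<And>U V. U \<in> \<U> \<Longrightarrow> V \<in> \<U> \<Longrightarrow> path_connectedin X (U \<inter> V)"
    and "\<And>U V W. U \<in> \<U> \<Longrightarrow> V \<in> \<U> \<Longrightarrow> W \<in> \<U> \<Longrightarrow> path_connectedin X (U \<inter> V \<inter> W)"
    and "group G"
    and "\<And>U. U \<in> \<U> \<Longrightarrow> hU U \<in> H1 (subtopology X U) b G"
  shows "((\<exists>h \<in> H1 X b G. \<forall>U \<in> \<U>. res1 X b G U h = hU U) \<longleftrightarrow>
           (\<forall>U \<in> \<U>. \<forall>V \<in> \<U>. res1 (subtopology X U) b G (U \<inter> V) (hU U)
                              = res1 (subtopology X V) b G (U \<inter> V) (hU V)))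
         \<and> (\<forall>h \<in> H1 X b G. \<forall>h' \<in> H1 X b G.
              (\<forall>U \<in> \<U>. res1 X b G U h = hU U) \<and> (\<forall>U \<in> \<U>. res1 X b G U h' = hU U) \<longrightarrow> h = h')"
proof -
  have "path_connected_cover G X b \<U>"
    unfolding path_connected_cover_def path_connected_cover_axioms_def using assms(1-4,6-8) by blast
  then interpret path_connected_cover G X b \<U> .
  have "h = h'"
    if "h \<in> H1 X b G" "h' \<in> H1 X b G" "\<forall>U \<in> \<U>. res1 X b G U h = hU U" "\<forall>U \<in> \<U>. res1 X b G U h' = hU U"
    for h h'
    using H1_eq_if_res1_eq[OF that(1,2)] that(3,4) by simp
  then show ?thesis
    using exists_H1_with_restrictions_iff[OF assms(9)] by blast
qed

end
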